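(* Let $\pi$ be a smooth representation of $G$ and let $v\in\pi^{I_1}$ be non-zero such that $I$ acts on $v$ via a character $\chi$. Then there exists $j$ with $0\le j\le q-1$ such that, setting $$w=\sum_{\lambda\in\mathbf F_q}\lambda^j\begin{pmatrix}1&[\lambda]\\0&1\end{pmatrix}t\,v$$ (with the convention $0^0=1$), we have $w\in\pi^{I_1}$ and $\langle K\cdot w\rangle$ is an irreducible (in particular non-zero) representation of $K$.
   Context: $F$ non-Archimedean local field, ring of integers $\mathfrak o$, maximal ideal $\mathfrak p$, uniformizer $\varpi$, residue field $\mathbf F_q$ of characteristic $p$ with a fixed embedding $\mathbf F_q\hookrightarrow\overline{\mathbf F}_p$ (used to interpret $\lambda^j\in\overline{\mathbf F}_p$), $[\lambda]$ the Teichmüller lift. $G=\mathrm{GL}_2(F)$, $K=\mathrm{GL}_2(\mathfrak o)$, $I=\begin{pmatrix}\mathfrak o^\times&\mathfrak o\\ \mathfrak p&\mathfrak o^\times\end{pmatrix}$, $I_1=\begin{pmatrix}1+\mathfrak p&\mathfrak o\\ \mathfrak p&1+\mathfrak p\end{pmatrix}$, $t=\begin{pmatrix}\varpi&0\\0&1\end{pmatrix}$. Representations are smooth on $\overline{\mathbf F}_p$-vector spaces; $\langle K\cdot w\rangle$ is the $K$-subrepresentation generated by $w$. *)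

theory Defs
  imports "HOL-Analysis.Analysis" "HOL-Computational_Algebra.Polynomial"
begin

text \<open>val x is the (normalized, integer valued) valuation of x; its value at 0 is irrelevant.\<close>

definition pow_ideal :: "('f::field \<Rightarrow> int) \<Rightarrow> int \<Rightarrow> 'f set" where
  "pow_ideal val n = {x. x = 0 \<or> val x \<ge> n}"

definition intring :: "('f::field \<Rightarrow> int) \<Rightarrow> 'f set" where
  "intring val = pow_ideal val 0"

definition maxideal :: "('f::field \<Rightarrow> int) \<Rightarrow> 'f set" where
  "maxideal val = pow_ideal val 1"

definition res :: "('f::field \<Rightarrow> int) \<Rightarrow> 'f \<Rightarrow> 'f set" where
  "res val x = {y \<in> intring val. x - y \<in> maxideal val}"

definition residue_field :: "('f::field \<Rightarrow> int) \<Rightarrow> 'f set set" where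
  "residue_field val = res val ` intring val"

definition discrete_valuation :: "('f::field \<Rightarrow> int) \<Rightarrow> bool" where
  "discrete_valuation val \<longleftrightarrow>
     (\<forall>x y. x \<noteq> 0 \<longrightarrow> y \<noteq> 0 \<longrightarrow> val (x * y) = val x + val y) \<and>
     (\<forall>x y. x \<noteq> 0 \<longrightarrow> y \<noteq> 0 \<longrightarrow> x + y \<noteq> 0 \<longrightarrow> val (x + y) \<ge> min (val x) (val y)) \<and>
     (\<exists>x. x \<noteq> 0 \<and> val x = 1)"

definition val_complete :: "('f::field \<Rightarrow> int) \<Rightarrow> bool" where
  "val_complete val \<longleftrightarrow>
     (\<forall>a :: nat \<Rightarrow> 'f.
        (\<forall>N. \<exists>M. \<forall>m\<ge>M. \<forall>n\<ge>M. a m - a n \<in> pow_ideal val N) \<longrightarrow>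
        (\<exists>L. \<forall>N. \<exists>M. \<forall>n\<ge>M. a n - L \<in> pow_ideal val N))"

definition nonarch_local_field :: "('f::field \<Rightarrow> int) \<Rightarrow> bool" where
  "nonarch_local_field val \<longleftrightarrow>
     discrete_valuation val \<and> val_complete val \<and> finite (residue_field val)"

definition qq :: "('f::field \<Rightarrow> int) \<Rightarrow> nat" where
  "qq val = card (residue_field val)"

definition teich :: "('f::field \<Rightarrow> int) \<Rightarrow> 'f set \<Rightarrow> 'f" where
  "teich val l = (THE x. x \<in> intring val \<and> x ^ qq val = x \<and> res val x = l)"

definition alg_closed :: "'k::field itself \<Rightarrow> bool" where
  "alg_closed _ \<longleftrightarrow> (\<forall>P :: 'k poly. degree P \<ge> 1 \<longrightarrow> (\<exists>x. poly P x = 0))"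

definition algebraic_over_prime_field :: "'k::field itself \<Rightarrow> bool" where
  "algebraic_over_prime_field _ \<longleftrightarrow>
     (\<forall>x :: 'k. \<exists>P :: 'k poly. P \<noteq> 0 \<and> (\<forall>i. coeff P i \<in> range of_nat) \<and> poly P x = 0)"

definition residue_embedding :: "('f::field \<Rightarrow> int) \<Rightarrow> ('f set \<Rightarrow> 'k::field) \<Rightarrow> bool" where
  "residue_embedding val \<iota> \<longleftrightarrow>
     inj_on \<iota> (residue_field val) \<and> \<iota> (res val 1) = 1 \<and>
     (\<forall>x\<in>intring val. \<forall>y\<in>intring val. \<iota> (res val (x + y)) = \<iota> (res val x) + \<iota> (res val y) \<and>
                              \<iota> (res val (x * y)) = \<iota> (res val x) * \<iota> (res val y))"

definition mat2 :: "'f::field \<Rightarrow> 'f \<Rightarrow> 'f \<Rightarrow> 'f \<Rightarrow> 'f^2^2" where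
  "mat2 a b c d = (\<chi> i j. if i = 1 then (if j = 1 then a else b) else (if j = 1 then c else d))"

definition GL2 :: "('f::field^2^2) set" where
  "GL2 = {g. det g \<noteq> 0}"

definition KK :: "('f::field \<Rightarrow> int) \<Rightarrow> ('f^2^2) set" where
  "KK val = {g. (\<forall>i j. g$i$j \<in> intring val) \<and> det g \<noteq> 0 \<and> val (det g) = 0}"

text \<open>Principal congruence subgroups K(n) = 1 + p^n M_2(o), a basis of open neighbourhoods of 1.\<close>
definition Kcong :: "('f::field \<Rightarrow> int) \<Rightarrow> nat \<Rightarrow> ('f^2^2) set" where
  "Kcong val n = {g \<in> KK val. \<forall>i j. g$i$j - mat 1 $i$j \<in> pow_ideal val (int n)}"

definition Iwahori :: "('f::field \<Rightarrow> int) \<Rightarrow> ('f^2^2) set" where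
  "Iwahori val = {g \<in> KK val. g$2$1 \<in> maxideal val}"

definition Iwahori1 :: "('f::field \<Rightarrow> int) \<Rightarrow> ('f^2^2) set" where
  "Iwahori1 val = {g \<in> Iwahori val. g$1$1 - 1 \<in> maxideal val \<and> g$2$2 - 1 \<in> maxideal val}"

definition smooth_rep ::
  "('f::field \<Rightarrow> int) \<Rightarrow> ('k::field \<Rightarrow> 'v::ab_group_add \<Rightarrow> 'v) \<Rightarrow> ('f^2^2 \<Rightarrow> 'v \<Rightarrow> 'v) \<Rightarrow> bool" where
  "smooth_rep val sc \<rho> \<longleftrightarrow>
     vector_space sc \<and>
     (\<forall>g\<in>GL2. Vector_Spaces.linear sc sc (\<rho> g)) \<and>
     \<rho> (mat 1) = id \<and>
     (\<forall>g\<in>GL2. \<forall>h\<in>GL2. \<rho> (g ** h) = \<rho> g \<circ> \<rho> h) \<and>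
     (\<forall>v. \<exists>n. \<forall>g\<in>Kcong val n. \<rho> g v = v)"

definition invariants :: "('f^2^2 \<Rightarrow> 'v \<Rightarrow> 'v) \<Rightarrow> ('f^2^2) set \<Rightarrow> 'v set" where
  "invariants \<rho> H = {v. \<forall>g\<in>H. \<rho> g v = v}"

definition gen_subrep ::
  "('k::field \<Rightarrow> 'v::ab_group_add \<Rightarrow> 'v) \<Rightarrow> ('f^2^2 \<Rightarrow> 'v \<Rightarrow> 'v) \<Rightarrow> ('f^2^2) set \<Rightarrow> 'v \<Rightarrow> 'v set" where
  "gen_subrep sc \<rho> H w = module.span sc {\<rho> g w | g. g \<in> H}"

definition irreducible_subrep ::
  "('k::field \<Rightarrow> 'v::ab_group_add \<Rightarrow> 'v) \<Rightarrow> ('f^2^2 \<Rightarrow> 'v \<Rightarrow> 'v) \<Rightarrow> ('f^2^2) set \<Rightarrow> 'v set \<Rightarrow> bool" where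
  "irreducible_subrep sc \<rho> H W \<longleftrightarrow>
     W \<noteq> {0} \<and>
     (\<forall>U. module.subspace sc U \<and> U \<subseteq> W \<and> (\<forall>g\<in>H. \<forall>u\<in>U. \<rho> g u \<in> U) \<longrightarrow> U = {0} \<or> U = W)"

end

theory Submission
  imports Defs
begin

text \<open>Write \<open>ev z = u([z]) t v\<close> for \<open>z \<in> \<bbbF>\<^sub>q\<close> and \<open>einf = s t v\<close>. These vectors span a
  \<open>K\<close>-stable space \<open>Vind\<close>, and the Iwahori subgroup permutes the lines through them by
  Moebius transformations of \<open>\<bbbP>\<^sup>1(\<bbbF>\<^sub>q)\<close>. The vectors \<open>w j = \<Sum>\<^sub>z z\<^sup>j ev z\<close> are eigenvectors of the diagonal torus,
  with distinct eigencharacters for \<open>1 \<le> j \<le> q - 2\<close>, and averaging \<open>u([\<xi>])\<close> against \<open>\<xi>\<^sup>m\<close>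
  extracts from \<open>w j\<close> non-zero multiples of the lower \<open>w k\<close> (binomial expansion and power sums
  over \<open>\<bbbF>\<^sub>q\<close>). Take a \<open>K\<close>-stable subspace \<open>U \<subseteq> Vind\<close> meeting the span of the \<open>ev z\<close>
  non-trivially, of minimal dimension. It contains a non-zero \<open>w j\<close>; for the least such \<open>j\<close>
  all lower terms vanish, so \<open>w j\<close> is \<open>I\<^sub>1\<close>-invariant, and it generates \<open>U\<close>. A proper
  non-zero \<open>K\<close>-stable subspace of \<open>U\<close> would be a line avoiding the span of the \<open>ev z\<close>;
  computing the action of \<open>s\<close>, \<open>u\<close> and the torus on it shows that \<open>\<chi>\<close> factors through
  \<open>det\<close> and that the line is spanned by \<open>\<epsilon> w 0 + einf\<close>, \<open>\<epsilon> = \<chi>(diag(-1, 1))\<close>. But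
  \<open>\<langle>K w 0\<rangle> = U\<close> lies in the \<open>K\<close>-stable kernel of \<open>ev z \<mapsto> \<epsilon>, einf \<mapsto> 1\<close>, which
  does not contain \<open>\<epsilon> w 0 + einf\<close>.\<close>

locale local_field =
  fixes val :: "'f::field \<Rightarrow> int" and unif :: 'f
  assumes local_field: "nonarch_local_field val"
    and unif_nonzero: "unif \<noteq> 0" and val_unif: "val unif = 1"
begin

abbreviation "\<oo> \<equiv> intring val"
abbreviation "\<pp> \<equiv> maxideal val"

lemma val_mult: "x \<noteq> 0 \<Longrightarrow> y \<noteq> 0 \<Longrightarrow> val (x * y) = val x + val y"
  using local_field by (simp add: nonarch_local_field_def discrete_valuation_def)

lemma val_add: "x \<noteq> 0 \<Longrightarrow> y \<noteq> 0 \<Longrightarrow> x + y \<noteq> 0 \<Longrightarrow> min (val x) (val y) \<le> val (x + y)"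
  using local_field by (simp add: nonarch_local_field_def discrete_valuation_def)

lemma val_one [simp]: "val 1 = 0"
  using val_mult[of 1 1] by simp

lemma val_inverse: "x \<noteq> 0 \<Longrightarrow> val (inverse x) = - val x"
  using val_mult[of x "inverse x"] by simp

lemma val_divide: "x \<noteq> 0 \<Longrightarrow> y \<noteq> 0 \<Longrightarrow> val (x / y) = val x - val y"
  using val_mult[of x "inverse y"] val_inverse[of y] by (simp add: divide_inverse)

lemma val_minus [simp]: "val (- x) = val x"
proof (cases "x = 0")
  case False
  have "val (-1) = 0" using val_mult[of "-1" "-1"] by simp
  with False show ?thesis using val_mult[of "-1" x] by simp
qed simp

lemma pow_ideal_iff: "x \<in> pow_ideal val n \<longleftrightarrow> x = 0 \<or> n \<le> val x"
  by (simp add: pow_ideal_def)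

lemma intring_iff: "x \<in> \<oo> \<longleftrightarrow> x = 0 \<or> 0 \<le> val x"
  by (simp add: intring_def pow_ideal_def)

lemma maxideal_iff: "x \<in> \<pp> \<longleftrightarrow> x = 0 \<or> 1 \<le> val x"
  by (simp add: maxideal_def pow_ideal_def)

lemma pow_ideal_add: "x \<in> pow_ideal val n \<Longrightarrow> y \<in> pow_ideal val n \<Longrightarrow> x + y \<in> pow_ideal val n"
  using val_add[of x y] unfolding pow_ideal_iff by (cases "x = 0"; cases "y = 0"; cases "x + y = 0"; auto)

lemma pow_ideal_diff: "x \<in> pow_ideal val n \<Longrightarrow> y \<in> pow_ideal val n \<Longrightarrow> x - y \<in> pow_ideal val n"
  using pow_ideal_add[of x n "- y"] by (simp add: pow_ideal_iff)

lemma pow_ideal_mult: "x \<in> pow_ideal val m \<Longrightarrow> y \<in> pow_ideal val n \<Longrightarrow> x * y \<in> pow_ideal val (m + n)"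
  using val_mult[of x y] unfolding pow_ideal_iff by (cases "x = 0"; cases "y = 0"; auto)

lemma pow_ideal_mono: "m \<le> n \<Longrightarrow> x \<in> pow_ideal val n \<Longrightarrow> x \<in> pow_ideal val m"
  by (auto simp: pow_ideal_iff)

lemma pow_ideal_zero [simp]: "0 \<in> pow_ideal val n"
  by (simp add: pow_ideal_iff)

lemma pow_ideal_sum: "(\<And>i. i \<in> A \<Longrightarrow> f i \<in> pow_ideal val n) \<Longrightarrow> sum f A \<in> pow_ideal val n"
  by (induction A rule: infinite_finite_induct) (auto intro: pow_ideal_add)

lemma pow_ideal_mult_intring: "x \<in> pow_ideal val n \<Longrightarrow> y \<in> \<oo> \<Longrightarrow> x * y \<in> pow_ideal val n"
  using pow_ideal_mult[of x n y 0] by (simp add: intring_def)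

lemma pow_ideal_intring: "0 \<le> n \<Longrightarrow> x \<in> pow_ideal val n \<Longrightarrow> x \<in> \<oo>"
  using pow_ideal_mono[of 0 n x] by (simp add: intring_def)

lemma pow_ideal_Inter: "(\<And>N. 1 \<le> N \<Longrightarrow> x \<in> pow_ideal val N) \<Longrightarrow> x = 0"
  using pow_ideal_iff[of x "max 1 (val x + 1)"] by fastforce

lemma intring_zero [simp]: "0 \<in> \<oo>" and intring_one [simp]: "1 \<in> \<oo>"
  and maxideal_zero [simp]: "0 \<in> \<pp>" and one_notin_maxideal [simp]: "1 \<notin> \<pp>"
  by (simp_all add: intring_iff maxideal_iff)

lemma intring_add: "x \<in> \<oo> \<Longrightarrow> y \<in> \<oo> \<Longrightarrow> x + y \<in> \<oo>"
  and intring_diff: "x \<in> \<oo> \<Longrightarrow> y \<in> \<oo> \<Longrightarrow> x - y \<in> \<oo>"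
  and intring_minus: "x \<in> \<oo> \<Longrightarrow> - x \<in> \<oo>"
  and intring_mult: "x \<in> \<oo> \<Longrightarrow> y \<in> \<oo> \<Longrightarrow> x * y \<in> \<oo>"
  using pow_ideal_add pow_ideal_diff pow_ideal_mult[of x 0 y 0] unfolding intring_def
  by (auto simp: pow_ideal_iff)

lemma intring_power: "x \<in> \<oo> \<Longrightarrow> x ^ n \<in> \<oo>"
  by (induction n) (auto intro: intring_mult)

lemma intring_sum: "(\<And>i. i \<in> A \<Longrightarrow> f i \<in> \<oo>) \<Longrightarrow> sum f A \<in> \<oo>"
  using pow_ideal_sum unfolding intring_def by blast

lemma intring_of_nat: "of_nat n \<in> \<oo>"
  by (induction n) (auto intro: intring_add)

lemma maxideal_add: "x \<in> \<pp> \<Longrightarrow> y \<in> \<pp> \<Longrightarrow> x + y \<in> \<pp>"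
  and maxideal_diff: "x \<in> \<pp> \<Longrightarrow> y \<in> \<pp> \<Longrightarrow> x - y \<in> \<pp>"
  and maxideal_minus: "x \<in> \<pp> \<Longrightarrow> - x \<in> \<pp>"
  and maxideal_mult_left: "x \<in> \<oo> \<Longrightarrow> y \<in> \<pp> \<Longrightarrow> x * y \<in> \<pp>"
  and maxideal_mult_right: "x \<in> \<pp> \<Longrightarrow> y \<in> \<oo> \<Longrightarrow> x * y \<in> \<pp>"
  and maxideal_intring: "x \<in> \<pp> \<Longrightarrow> x \<in> \<oo>"
  using pow_ideal_add pow_ideal_diff pow_ideal_mult[of x 0 y 1] pow_ideal_mult[of x 1 y 0]
  unfolding intring_def maxideal_def by (auto simp: pow_ideal_iff)

lemma unif_maxideal: "unif \<in> \<pp>"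
  by (simp add: maxideal_iff val_unif)

lemma mult_unif_maxideal: "x \<in> \<oo> \<Longrightarrow> x * unif \<in> \<pp>"
  using maxideal_mult_left unif_maxideal by blast

lemma divide_unif_intring: "x \<in> \<pp> \<Longrightarrow> x / unif \<in> \<oo>"
  using val_divide[of x unif] unif_nonzero val_unif unfolding maxideal_iff intring_iff
  by (cases "x = 0") auto

lemma unit_iff: "x \<in> \<oo> \<and> x \<notin> \<pp> \<longleftrightarrow> x \<noteq> 0 \<and> val x = 0"
  by (auto simp: intring_iff maxideal_iff)

lemma unit_nonzero: "x \<in> \<oo> \<Longrightarrow> x \<notin> \<pp> \<Longrightarrow> x \<noteq> 0"
  using unit_iff by blast

lemma unit_inverse: "x \<in> \<oo> \<Longrightarrow> x \<notin> \<pp> \<Longrightarrow> inverse x \<in> \<oo> \<and> inverse x \<notin> \<pp>"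
  using unit_iff[of x] unit_iff[of "inverse x"] val_inverse[of x] by auto

lemma unit_mult: "x \<in> \<oo> \<Longrightarrow> x \<notin> \<pp> \<Longrightarrow> y \<in> \<oo> \<Longrightarrow> y \<notin> \<pp> \<Longrightarrow> x * y \<in> \<oo> \<and> x * y \<notin> \<pp>"
  using unit_iff[of x] unit_iff[of y] unit_iff[of "x * y"] val_mult[of x y] by auto

lemma divide_unit_intring: "x \<in> \<oo> \<Longrightarrow> y \<in> \<oo> \<Longrightarrow> y \<notin> \<pp> \<Longrightarrow> x / y \<in> \<oo>"
  using unit_inverse[of y] intring_mult[of x "inverse y"] by (simp add: divide_inverse)

lemma unit_add_maxideal: "x \<in> \<oo> \<Longrightarrow> x \<notin> \<pp> \<Longrightarrow> y \<in> \<pp> \<Longrightarrow> x + y \<in> \<oo> \<and> x + y \<notin> \<pp>"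
  using maxideal_diff[of "x + y" y] intring_add[of x y] maxideal_intring[of y] by auto

lemma unit_diff_maxideal: "x \<in> \<oo> \<Longrightarrow> x \<notin> \<pp> \<Longrightarrow> y \<in> \<pp> \<Longrightarrow> x - y \<in> \<oo> \<and> x - y \<notin> \<pp>"
  using unit_add_maxideal[of x "- y"] maxideal_minus[of y] by simp

lemma one_plus_maxideal_unit: "x - 1 \<in> \<pp> \<Longrightarrow> x \<in> \<oo> \<and> x \<notin> \<pp>"
  using unit_add_maxideal[of 1 "x - 1"] by simp

lemma minus_one_unit: "- 1 \<in> \<oo>" "- 1 \<notin> \<pp>"
  using maxideal_minus[of "- 1"] intring_minus[of 1] by auto

end

section \<open>Finite subfields\<close>

locale finite_subfield =
  fixes S :: "'k::field set"
  assumes finite_S: "finite S"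
    and zero_mem: "0 \<in> S" and one_mem: "1 \<in> S"
    and add_mem: "a \<in> S \<Longrightarrow> b \<in> S \<Longrightarrow> a + b \<in> S"
    and minus_mem: "a \<in> S \<Longrightarrow> - a \<in> S"
    and mult_mem: "a \<in> S \<Longrightarrow> b \<in> S \<Longrightarrow> a * b \<in> S"
    and inverse_mem: "a \<in> S \<Longrightarrow> inverse a \<in> S"
begin

lemma diff_mem: "a \<in> S \<Longrightarrow> b \<in> S \<Longrightarrow> a - b \<in> S"
  using add_mem[of a "- b"] minus_mem[of b] by simp

lemma divide_mem: "a \<in> S \<Longrightarrow> b \<in> S \<Longrightarrow> a / b \<in> S"
  using mult_mem[of a "inverse b"] inverse_mem[of b] by (simp add: divide_inverse)

lemma bij_betw_affine: "\<alpha> \<in> S \<Longrightarrow> \<alpha> \<noteq> 0 \<Longrightarrow> \<beta> \<in> S \<Longrightarrow> bij_betw (\<lambda>z. \<alpha> * z + \<beta>) S S"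
  by (rule bij_betw_byWitness[where f' = "\<lambda>z. (z - \<beta>) / \<alpha>"])
     (auto intro: add_mem mult_mem diff_mem divide_mem)

lemma sum_affine: "\<alpha> \<in> S \<Longrightarrow> \<alpha> \<noteq> 0 \<Longrightarrow> \<beta> \<in> S \<Longrightarrow> (\<Sum>z\<in>S. f z) = (\<Sum>z\<in>S. f (\<alpha> * z + \<beta>))"
  using sum.reindex_bij_betw[OF bij_betw_affine, of \<alpha> \<beta> f] by simp

lemma sum_translate: "\<beta> \<in> S \<Longrightarrow> (\<Sum>z\<in>S. f z) = (\<Sum>z\<in>S. f (z + \<beta>))"
  using sum_affine[OF one_mem _, of \<beta> f] by simp

lemma sum_scale: "\<alpha> \<in> S \<Longrightarrow> \<alpha> \<noteq> 0 \<Longrightarrow> (\<Sum>z\<in>S. f z) = (\<Sum>z\<in>S. f (\<alpha> * z))"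
  using sum_affine[OF _ _ zero_mem, of \<alpha> f] by simp

lemma sum_split_zero: "(\<Sum>z\<in>S. f z) = f 0 + (\<Sum>z\<in>S - {0}. f z)"
  by (rule sum.remove) (simp_all add: finite_S zero_mem)

lemma prod_scale_nonzero:
  "\<alpha> \<in> S \<Longrightarrow> \<alpha> \<noteq> 0 \<Longrightarrow> (\<Prod>z\<in>S - {0}. f z) = (\<Prod>z\<in>S - {0}. f (\<alpha> * z))"
  by (rule prod.reindex_bij_betw[symmetric], rule bij_betw_byWitness[where f' = "\<lambda>z. z / \<alpha>"])
     (auto intro: mult_mem divide_mem)

lemma sum_scale_nonzero:
  "\<alpha> \<in> S \<Longrightarrow> \<alpha> \<noteq> 0 \<Longrightarrow> (\<Sum>z\<in>S - {0}. f z) = (\<Sum>z\<in>S - {0}. f (\<alpha> * z))"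
  by (rule sum.reindex_bij_betw[symmetric], rule bij_betw_byWitness[where f' = "\<lambda>z. z / \<alpha>"])
     (auto intro: mult_mem divide_mem)

lemma sum_inverse_nonzero: "(\<Sum>z\<in>S - {0}. f z) = (\<Sum>z\<in>S - {0}. f (1 / z))"
  by (rule sum.reindex_bij_betw[symmetric], rule bij_betw_byWitness[where f' = "\<lambda>z. 1 / z"])
     (auto intro: divide_mem one_mem)

lemma of_nat_card_eq_0: "of_nat (card S) = (0 :: 'k)"
proof -
  have "(\<Sum>z\<in>S. z) = (\<Sum>z\<in>S. z + 1)"
    by (rule sum_translate[OF one_mem])
  also have "\<dots> = (\<Sum>z\<in>S. z) + of_nat (card S)"
    by (simp add: sum.distrib)
  finally show ?thesis by simp
qed

lemma card_ge_2: "2 \<le> card S"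
  using card_mono[OF finite_S, of "{0, 1}"] zero_mem one_mem by simp

lemma card_nonzero: "card (S - {0}) = card S - 1"
  using finite_S zero_mem by (simp add: card_Diff_singleton)

lemma power_card_minus_1: "a \<in> S \<Longrightarrow> a \<noteq> 0 \<Longrightarrow> a ^ (card S - 1) = 1"
proof -
  assume a: "a \<in> S" "a \<noteq> 0"
  have "(\<Prod>z\<in>S - {0}. z) = (\<Prod>z\<in>S - {0}. a * z)"
    by (rule prod_scale_nonzero[OF a])
  also have "\<dots> = a ^ (card S - 1) * (\<Prod>z\<in>S - {0}. z)"
    by (simp add: prod.distrib card_nonzero)
  finally show ?thesis
    using finite_S by (simp add: mult_cancel_right2[symmetric] del: mult_cancel_right2)
qed

lemma power_card: "a \<in> S \<Longrightarrow> a ^ card S = a"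
proof (cases "a = 0")
  case False
  assume "a \<in> S"
  have "card S = Suc (card S - 1)" using card_ge_2 by simp
  then have "a ^ card S = a * a ^ (card S - 1)" by (metis power_Suc)
  then show ?thesis using power_card_minus_1[OF \<open>a \<in> S\<close> False] by simp
qed (use card_ge_2 in simp)

lemma inverse_eq_power: "a \<in> S \<Longrightarrow> a \<noteq> 0 \<Longrightarrow> inverse a = a ^ (card S - 2)"
proof -
  assume a: "a \<in> S" "a \<noteq> 0"
  have "card S - 1 = Suc (card S - 2)" using card_ge_2 by simp
  then have "a * a ^ (card S - 2) = 1" using power_card_minus_1[OF a] by (metis power_Suc)
  then show ?thesis by (rule inverse_unique)
qed

lemma power_mod_card_minus_1: "a \<in> S \<Longrightarrow> a \<noteq> 0 \<Longrightarrow> a ^ n = a ^ (n mod (card S - 1))"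
proof -
  assume a: "a \<in> S" "a \<noteq> 0"
  have "a ^ n = (a ^ (card S - 1)) ^ (n div (card S - 1)) * a ^ (n mod (card S - 1))"
    by (simp flip: power_mult power_add)
  then show ?thesis using power_card_minus_1[OF a] by simp
qed

lemma exists_power_ne_1:
  assumes "\<not> (card S - 1) dvd n"
  shows "\<exists>a\<in>S - {0}. a ^ n \<noteq> 1"
proof (rule ccontr)
  assume "\<not> ?thesis"
  then have all: "\<And>a. a \<in> S - {0} \<Longrightarrow> a ^ n = 1" by blast
  define r where "r = n mod (card S - 1)"
  have r: "0 < r" "r < card S - 1"
    using assms card_ge_2 unfolding r_def by (auto simp: dvd_eq_mod_eq_0)
  define p :: "'k poly" where "p = [:-1:] + monom 1 r"
  have deg: "degree p = r"
    using r unfolding p_def by (subst degree_add_eq_right) (auto simp: degree_monom_eq)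
  then have "p \<noteq> 0" using r by auto
  have "S - {0} \<subseteq> {x. poly p x = 0}"
  proof
    fix a assume a: "a \<in> S - {0}"
    then have "a ^ r = 1" using all[OF a] power_mod_card_minus_1[of a n] by (simp add: r_def)
    then show "a \<in> {x. poly p x = 0}" by (simp add: p_def poly_monom)
  qed
  then have "card (S - {0}) \<le> card {x. poly p x = 0}"
    using poly_roots_finite[OF \<open>p \<noteq> 0\<close>] card_mono by blast
  also have "\<dots> \<le> r" using card_poly_roots_bound[OF \<open>p \<noteq> 0\<close>] deg by simp
  finally show False using card_nonzero r by linarith
qed

lemma sum_powers_nonzero: "(\<Sum>z\<in>S - {0}. z ^ n) = (if (card S - 1) dvd n then -1 else 0)"
proof (cases "(card S - 1) dvd n")
  case True
  then obtain m where n: "n = (card S - 1) * m" by blast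
  have "(\<Sum>z\<in>S - {0}. z ^ n) = (\<Sum>z\<in>S - {0}. 1)"
    using power_card_minus_1 by (intro sum.cong) (simp_all add: n power_mult)
  also have "\<dots> = - 1"
    using of_nat_card_eq_0 card_ge_2 by (simp add: card_nonzero of_nat_diff)
  finally show ?thesis using True by simp
next
  case False
  then obtain a where a: "a \<in> S - {0}" "a ^ n \<noteq> 1" using exists_power_ne_1 by blast
  have "(\<Sum>z\<in>S - {0}. z ^ n) = (\<Sum>z\<in>S - {0}. (a * z) ^ n)"
    using a by (intro sum_scale_nonzero) auto
  also have "\<dots> = a ^ n * (\<Sum>z\<in>S - {0}. z ^ n)"
    by (simp add: power_mult_distrib sum_distrib_left)
  finally have "(1 - a ^ n) * (\<Sum>z\<in>S - {0}. z ^ n) = 0" by (simp add: algebra_simps)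
  then show ?thesis using a False by simp
qed

lemma sum_powers: "(\<Sum>z\<in>S. z ^ n) = (if 0 < n \<and> (card S - 1) dvd n then -1 else 0)"
  using sum_split_zero[of "\<lambda>z. z ^ n"] sum_powers_nonzero[of n] of_nat_card_eq_0
  by (cases "n = 0") auto

end

section \<open>The residue field and Teichmueller lifts\<close>

locale residue_embedding_field = local_field val unif for val :: "'f::field \<Rightarrow> int" and unif +
  fixes \<iota> :: "'f set \<Rightarrow> 'k::field"
  assumes embedding: "residue_embedding val \<iota>"
begin

abbreviation "q \<equiv> qq val"

definition red :: "'f \<Rightarrow> 'k" where "red x = \<iota> (res val x)"

definition Fq :: "'k set" where "Fq = \<iota> ` residue_field val"

lemma res_eq_iff: "x \<in> \<oo> \<Longrightarrow> y \<in> \<oo> \<Longrightarrow> res val x = res val y \<longleftrightarrow> x - y \<in> \<pp>"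
proof
  assume xy: "x \<in> \<oo>" "y \<in> \<oo>" and "res val x = res val y"
  then have "y \<in> res val x" by (simp add: res_def)
  then show "x - y \<in> \<pp>" by (simp add: res_def)
next
  assume "x - y \<in> \<pp>"
  then show "res val x = res val y"
    using maxideal_diff[of "x - _" "x - y"] maxideal_add[of "x - y"] by (fastforce simp: res_def)
qed

lemma red_add: "x \<in> \<oo> \<Longrightarrow> y \<in> \<oo> \<Longrightarrow> red (x + y) = red x + red y"
  and red_mult: "x \<in> \<oo> \<Longrightarrow> y \<in> \<oo> \<Longrightarrow> red (x * y) = red x * red y"
  and red_one [simp]: "red 1 = 1"
  using embedding by (simp_all add: residue_embedding_def red_def)

lemma red_zero [simp]: "red 0 = 0"
  using red_add[of 0 0] by (metis add.right_neutral add_left_cancel intring_zero)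

lemma red_minus: "x \<in> \<oo> \<Longrightarrow> red (- x) = - red x"
  using red_add[of x "- x"] intring_minus[of x] by (metis add.right_inverse neg_eq_iff_add_eq_0 red_zero)

lemma red_diff: "x \<in> \<oo> \<Longrightarrow> y \<in> \<oo> \<Longrightarrow> red (x - y) = red x - red y"
  using red_add[of x "- y"] red_minus[of y] intring_minus[of y] by simp

lemma red_power: "x \<in> \<oo> \<Longrightarrow> red (x ^ n) = red x ^ n"
  by (induction n) (auto simp: red_mult intring_power)

lemma red_of_nat: "red (of_nat n) = of_nat n"
  by (induction n) (auto simp: red_add intring_of_nat)

lemma red_sum: "(\<And>i. i \<in> A \<Longrightarrow> f i \<in> \<oo>) \<Longrightarrow> red (sum f A) = (\<Sum>i\<in>A. red (f i))"
  by (induction A rule: infinite_finite_induct) (auto simp: red_add intring_sum)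

lemma red_eq_iff: "x \<in> \<oo> \<Longrightarrow> y \<in> \<oo> \<Longrightarrow> red x = red y \<longleftrightarrow> x - y \<in> \<pp>"
proof -
  assume xy: "x \<in> \<oo>" "y \<in> \<oo>"
  have "inj_on \<iota> (residue_field val)" using embedding by (simp add: residue_embedding_def)
  moreover have "res val x \<in> residue_field val" "res val y \<in> residue_field val"
    using xy by (simp_all add: residue_field_def)
  ultimately show ?thesis using res_eq_iff[OF xy] unfolding red_def inj_on_def by metis
qed

lemma red_eq_0_iff: "x \<in> \<oo> \<Longrightarrow> red x = 0 \<longleftrightarrow> x \<in> \<pp>"
  using red_eq_iff[of x 0] by simp

lemma red_inverse: "x \<in> \<oo> \<Longrightarrow> x \<notin> \<pp> \<Longrightarrow> red (inverse x) = inverse (red x)"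
  using red_mult[of x "inverse x"] unit_inverse[of x] unit_nonzero[of x]
  by (metis inverse_unique red_one right_inverse)

lemma red_divide: "x \<in> \<oo> \<Longrightarrow> y \<in> \<oo> \<Longrightarrow> y \<notin> \<pp> \<Longrightarrow> red (x / y) = red x / red y"
  using red_mult[of x "inverse y"] red_inverse[of y] unit_inverse[of y] by (simp add: divide_inverse)

lemma Fq_eq: "Fq = red ` \<oo>"
  by (auto simp: Fq_def red_def residue_field_def)

lemma red_in_Fq: "x \<in> \<oo> \<Longrightarrow> red x \<in> Fq"
  by (simp add: Fq_eq)

lemma card_Fq: "card Fq = q"
  using embedding by (simp add: Fq_def qq_def card_image residue_embedding_def)

sublocale Fq: finite_subfield Fq
  rewrites "card Fq = q"
proof -
  show "finite_subfield Fq"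
  proof
    show "finite Fq"
      using local_field by (simp add: Fq_def nonarch_local_field_def)
    show "0 \<in> Fq" "1 \<in> Fq"
      using red_in_Fq[of 0] red_in_Fq[of 1] by simp_all
    show "a + b \<in> Fq" "a * b \<in> Fq" if "a \<in> Fq" "b \<in> Fq" for a b
      using that by (auto simp: Fq_eq red_add[symmetric] red_mult[symmetric] intro: intring_add intring_mult)
    show "- a \<in> Fq" if "a \<in> Fq" for a
      using that by (auto simp: Fq_eq red_minus[symmetric] intro: intring_minus)
    show "inverse a \<in> Fq" if "a \<in> Fq" for a
    proof -
      obtain x where x: "x \<in> \<oo>" "a = red x" using \<open>a \<in> Fq\<close> by (auto simp: Fq_eq)
      show ?thesis
      proof (cases "x \<in> \<pp>")
        case True
        then have "a = 0" using x red_eq_0_iff by simp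
        then show ?thesis using red_in_Fq[of 0] by simp
      next
        case False then show ?thesis using x red_inverse unit_inverse red_in_Fq by metis
      qed
    qed
  qed
  show "card Fq = q" by (rule card_Fq)
qed

text \<open>An arbitrary lift of an element of \<open>Fq\<close> to \<open>\<oo>\<close>; its class modulo \<open>\<pp>\<close> is all that matters.\<close>

definition lift :: "'k \<Rightarrow> 'f" where "lift z = (SOME x. x \<in> \<oo> \<and> red x = z)"

lemma lift_intring: "z \<in> Fq \<Longrightarrow> lift z \<in> \<oo>"
  and red_lift [simp]: "z \<in> Fq \<Longrightarrow> red (lift z) = z"
  using someI_ex[of "\<lambda>x. x \<in> \<oo> \<and> red x = z"] by (auto simp: lift_def Fq_eq)

lemma lift_unit: "z \<in> Fq \<Longrightarrow> z \<noteq> 0 \<Longrightarrow> lift z \<notin> \<pp>"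
  using red_eq_0_iff[OF lift_intring] by auto

lemma of_nat_q_maxideal: "(of_nat q :: 'f) \<in> \<pp>"
  using red_eq_0_iff[of "of_nat q"] red_of_nat[of q] Fq.of_nat_card_eq_0 intring_of_nat by simp

lemma power_q_diff:
  assumes x: "x \<in> \<oo>" and y: "y \<in> \<oo>" and n: "1 \<le> n" and d: "x - y \<in> pow_ideal val n"
  shows "x ^ q - y ^ q \<in> pow_ideal val (n + 1)"
proof -
  define c where "c = x - y"
  have c: "c \<in> \<oo>" "c \<in> pow_ideal val n" using pow_ideal_intring[of n "x - y"] n d by (auto simp: c_def)
  have "x ^ q = (\<Sum>k\<le>q. of_nat (q choose k) * c ^ k * y ^ (q - k))"
    using binomial_ring[of c y q] by (simp add: c_def)
  also have "\<dots> = y ^ q + (\<Sum>k\<in>{1..q}. of_nat (q choose k) * c ^ k * y ^ (q - k))"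
    by (simp add: atMost_atLeast0 sum.atLeast_Suc_atMost)
  finally have eq: "x ^ q - y ^ q = (\<Sum>k\<in>{1..q}. of_nat (q choose k) * c ^ k * y ^ (q - k))"
    by simp
  have "of_nat (q choose k) * c ^ k * y ^ (q - k) \<in> pow_ideal val (n + 1)" if k: "k \<in> {1..q}" for k
  proof (cases "k = 1")
    case True
    have "of_nat q * c \<in> pow_ideal val (1 + n)"
      using pow_ideal_mult[of "of_nat q" 1 c n] of_nat_q_maxideal c by (simp add: maxideal_def)
    then show ?thesis
      using True pow_ideal_mult_intring intring_power y by (simp add: add.commute)
  next
    case False
    then obtain k' where "k = Suc (Suc k')" using k by (metis One_nat_def atLeastAtMost_iff not0_implies_Suc not_one_le_zero)
    then have k2: "c ^ k = (c * c) * c ^ (k - 2)" by simp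
    have "c * c \<in> pow_ideal val (n + 1)"
      using pow_ideal_mono[of "n + 1" "n + n"] pow_ideal_mult[OF c(2) c(2)] n by simp
    then have "c ^ k \<in> pow_ideal val (n + 1)"
      unfolding k2 using pow_ideal_mult_intring intring_power c by blast
    then have "c ^ k * (of_nat (q choose k) * y ^ (q - k)) \<in> pow_ideal val (n + 1)"
      using pow_ideal_mult_intring intring_mult intring_of_nat intring_power y by blast
    then show ?thesis by (simp add: ac_simps)
  qed
  then show ?thesis unfolding eq by (rule pow_ideal_sum)
qed

lemma teich_unique:
  assumes x: "x \<in> \<oo>" and y: "y \<in> \<oo>" and "x ^ q = x" "y ^ q = y" and d: "x - y \<in> \<pp>"
  shows "x = y"
proof -
  define S where "S = (\<Sum>i<q. y ^ (q - Suc i) * x ^ i)"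
  have S: "S \<in> \<oo>" unfolding S_def using x y by (auto intro!: intring_sum intring_mult intring_power)
  have "red S = (\<Sum>i<q. red y ^ (q - Suc i) * red x ^ i)"
    unfolding S_def using x y by (simp add: red_sum red_mult red_power intring_mult intring_power)
  also have "\<dots> = (\<Sum>i<q. red y ^ (q - 1))"
    using red_eq_iff[OF x y] d by (intro sum.cong) (simp_all flip: power_add)
  finally have "red S = 0" using Fq.of_nat_card_eq_0 by simp
  then have "1 - S \<noteq> 0" using red_eq_0_iff[OF S] by auto
  \<comment> \<open>\<open>x - y = (x ^ q - y ^ q) = (x - y) * S\<close> with \<open>S \<in> \<pp>\<close>\<close>
  moreover have "(x - y) * (1 - S) = 0"
    using power_diff_sumr2[of x q y] assms by (simp add: S_def algebra_simps)
  ultimately show ?thesis by simp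
qed

lemma power_q_iterate_diff:
  assumes y: "y \<in> \<oo>" and "n \<le> m"
  shows "y ^ (q ^ m) - y ^ (q ^ n) \<in> pow_ideal val (int n + 1)"
proof -
  have step: "y ^ (q ^ Suc k) - y ^ (q ^ k) \<in> pow_ideal val (int k + 1)" for k
  proof (induction k)
    case 0
    have "red (y ^ q - y) = 0"
      using y Fq.power_card red_diff red_power red_in_Fq intring_power by simp
    then show ?case using red_eq_0_iff y intring_diff intring_power by (simp add: maxideal_def)
  next
    case (Suc k)
    then show ?case
      using power_q_diff[of "y ^ (q ^ Suc k)" "y ^ (q ^ k)" "int k + 1"] y intring_power
      by (simp add: power_mult[symmetric] mult.commute)
  qed
  from \<open>n \<le> m\<close> show ?thesis
  proof (induction m)
    case (Suc m)
    show ?case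
    proof (cases "n = Suc m")
      case False
      then have "y ^ (q ^ m) - y ^ (q ^ n) \<in> pow_ideal val (int n + 1)" using Suc by simp
      moreover have "y ^ (q ^ Suc m) - y ^ (q ^ m) \<in> pow_ideal val (int n + 1)"
        using pow_ideal_mono[OF _ step[of m]] Suc.prems False by simp
      ultimately show ?thesis using pow_ideal_add by fastforce
    qed simp
  qed simp
qed

lemma teich_exists:
  assumes y: "y \<in> \<oo>"
  shows "\<exists>x. x \<in> \<oo> \<and> x ^ q = x \<and> x - y \<in> \<pp>"
proof -
  define a where "a k = y ^ (q ^ k)" for k
  have a: "a k \<in> \<oo>" "a (Suc k) = a k ^ q" for k
    using y by (simp_all add: a_def intring_power power_mult[symmetric] mult.commute)
  have "\<exists>M. \<forall>m\<ge>M. \<forall>n\<ge>M. a m - a n \<in> pow_ideal val N" for N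
  proof (intro exI allI impI)
    fix m n assume "nat N \<le> m" "nat N \<le> n"
    then have "a m - a (nat N) - (a n - a (nat N)) \<in> pow_ideal val (int (nat N) + 1)"
      using power_q_iterate_diff[OF y] pow_ideal_diff unfolding a_def by blast
    moreover have "N \<le> int (nat N) + 1" by simp
    ultimately show "a m - a n \<in> pow_ideal val N" using pow_ideal_mono by fastforce
  qed
  then obtain x where x: "\<And>N. \<exists>M. \<forall>n\<ge>M. a n - x \<in> pow_ideal val N"
    using local_field unfolding nonarch_local_field_def val_complete_def by blast
  obtain M where M: "\<And>n. n \<ge> M \<Longrightarrow> a n - x \<in> \<pp>"
    using x[of 1] by (auto simp: maxideal_def)
  have "a M - (a M - x) \<in> \<oo>"
    using intring_diff[OF a(1) maxideal_intring[OF M]] by blast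
  then have "x \<in> \<oo>" by simp
  moreover have "x - y \<in> \<pp>"
  proof -
    have "a M - a 0 \<in> \<pp>"
      using power_q_iterate_diff[OF y, of 0 M] by (simp add: a_def maxideal_def)
    then have "(a M - a 0) - (a M - x) \<in> \<pp>" using maxideal_diff M by blast
    then show ?thesis by (simp add: a_def)
  qed
  moreover have "x ^ q - x \<in> pow_ideal val N" if N: "1 \<le> N" for N
  proof -
    obtain M where M: "\<And>n. n \<ge> M \<Longrightarrow> a n - x \<in> pow_ideal val N" using x by blast
    have "a M ^ q - x ^ q \<in> pow_ideal val N"
      using power_q_diff[OF a(1) \<open>x \<in> \<oo>\<close> N M[of M]] pow_ideal_mono[of N "N + 1"] by simp
    then show ?thesis using pow_ideal_diff[OF M[of "Suc M"]] a(2) by fastforce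
  qed
  then have "x ^ q = x" using pow_ideal_Inter[of "x ^ q - x"] by simp
  ultimately show ?thesis by blast
qed

lemma teich:
  assumes l: "l \<in> residue_field val"
  shows "teich val l \<in> \<oo>" and "red (teich val l) = \<iota> l"
proof -
  obtain y where y: "y \<in> \<oo>" "l = res val y" using l by (auto simp: residue_field_def)
  obtain x where x: "x \<in> \<oo>" "x ^ q = x" "x - y \<in> \<pp>" using teich_exists[OF y(1)] by blast
  have "teich val l = x"
    unfolding teich_def
  proof (rule the_equality)
    show "x \<in> \<oo> \<and> x ^ q = x \<and> res val x = l" using x y res_eq_iff by simp
    show "z = x" if z: "z \<in> \<oo> \<and> z ^ q = z \<and> res val z = l" for z
    proof (rule teich_unique)
      have "(z - y) - (x - y) \<in> \<pp>" using z x y res_eq_iff[of z y] maxideal_diff by blast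
      then show "z - x \<in> \<pp>" by simp
    qed (use z x in auto)
  qed
  moreover have "res val x = l" using x y res_eq_iff by simp
  ultimately show "teich val l \<in> \<oo>" "red (teich val l) = \<iota> l"
    using x by (simp_all add: red_def)
qed

end

section \<open>\<open>2 \<times> 2\<close> matrices and the Iwahori subgroup\<close>

lemma mat2_nth [simp]:
  "(mat2 a b c d)$1$1 = a" "(mat2 a b c d)$1$2 = b" "(mat2 a b c d)$2$1 = c" "(mat2 a b c d)$2$2 = d"
  by (simp_all add: mat2_def)

lemma mat2_eta: "(g::'f::field^2^2) = mat2 (g$1$1) (g$1$2) (g$2$1) (g$2$2)"
  by (simp add: mat2_def vec_eq_iff forall_2)

lemma mat2_eq_iff: "mat2 a b c d = mat2 a' b' c' d' \<longleftrightarrow> a = a' \<and> b = b' \<and> c = c' \<and> d = d'"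
  by (auto simp: vec_eq_iff forall_2 mat2_def)

lemma mat2_mult:
  "mat2 a b c d ** mat2 a' b' c' d' = mat2 (a*a'+b*c') (a*b'+b*d') (c*a'+d*c') (c*b'+d*d')"
  by (simp add: vec_eq_iff forall_2 matrix_matrix_mult_def sum_2 mat2_def)

lemma det_mat2: "det (mat2 a b c d) = a * d - b * c"
  by (simp add: det_2)

lemma mat_1_eq_mat2: "(mat 1 :: 'f::field^2^2) = mat2 1 0 0 1"
  by (simp add: vec_eq_iff forall_2 mat2_def mat_def)

lemma GL2_mat2_iff: "mat2 a b c d \<in> GL2 \<longleftrightarrow> a * d - b * c \<noteq> 0"
  by (simp add: GL2_def det_mat2)

lemma GL2_mult: "g \<in> GL2 \<Longrightarrow> h \<in> GL2 \<Longrightarrow> g ** h \<in> GL2"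
  by (simp add: GL2_def det_mul)

definition tmat :: "'f::field \<Rightarrow> 'f^2^2" where "tmat p = mat2 p 0 0 1"
definition umat :: "'f::field \<Rightarrow> 'f^2^2" where "umat x = mat2 1 x 0 1"
definition smat :: "'f::field^2^2" where "smat = mat2 0 1 1 0"

lemma tmat_GL2: "p \<noteq> 0 \<Longrightarrow> tmat p \<in> GL2"
  and umat_GL2: "umat x \<in> GL2"
  and smat_GL2: "smat \<in> GL2"
  by (simp_all add: tmat_def umat_def smat_def GL2_mat2_iff)

text \<open>Moving \<open>g\<close> past \<open>umat x ** tmat p\<close> by the Moebius transformation of \<open>x\<close>.\<close>

lemma mat2_umat_tmat:
  assumes "c * x + d \<noteq> 0" "y = (a * x + b) / (c * x + d)"
  shows "mat2 a b c d ** umat x ** tmat p = umat y ** tmat p ** mat2 (a - y * c) 0 (c * p) (c * x + d)"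
proof -
  have "y * (c * x + d) = a * x + b" using assms by simp
  then show ?thesis by (simp add: umat_def tmat_def mat2_mult mat2_eq_iff algebra_simps)
qed

lemma mat2_smat_tmat: "p \<noteq> 0 \<Longrightarrow> mat2 a b c d ** smat ** tmat p = smat ** tmat p ** mat2 d (c / p) (b * p) a"
  by (simp add: smat_def tmat_def mat2_mult mat2_eq_iff algebra_simps)

lemma smat_umat_tmat: "x \<noteq> 0 \<Longrightarrow> smat ** umat x ** tmat p = umat (1 / x) ** tmat p ** mat2 (- 1 / x) 0 p x"
  by (simp add: smat_def umat_def tmat_def mat2_mult mat2_eq_iff algebra_simps)

lemma umat_tmat_recentre: "p \<noteq> 0 \<Longrightarrow> umat x ** tmat p = umat z ** tmat p ** umat ((x - z) / p)"
  by (simp add: umat_def tmat_def mat2_mult mat2_eq_iff field_simps)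

lemma umat_add: "umat x ** umat y = umat (x + y)"
  by (simp add: umat_def mat2_mult mat2_eq_iff)

lemma smat_smat: "smat ** smat = mat 1"
  by (simp add: smat_def mat2_mult mat_1_eq_mat2)

lemma tmat_inverse: "p \<noteq> 0 \<Longrightarrow> tmat (1 / p) ** tmat p = mat 1"
  by (simp add: tmat_def mat2_mult mat_1_eq_mat2)

lemma mat2_bruhat: "c \<noteq> 0 \<Longrightarrow> mat2 a b c d = umat (a / c) ** smat ** mat2 c d 0 (b - a * d / c)"
  by (simp add: smat_def umat_def mat2_mult mat2_eq_iff algebra_simps)

lemma mat2_lower_diag_upper:
  "a \<noteq> 0 \<Longrightarrow> mat2 a b c d = mat2 1 0 (c / a) 1 ** mat2 a 0 0 1 ** mat2 1 0 0 ((a * d - b * c) / a) ** umat (b / a)"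
  by (simp add: umat_def mat2_mult mat2_eq_iff field_simps)

context local_field
begin

lemma KK_mat2_iff:
  "mat2 a b c d \<in> KK val \<longleftrightarrow> a \<in> \<oo> \<and> b \<in> \<oo> \<and> c \<in> \<oo> \<and> d \<in> \<oo> \<and> a * d - b * c \<notin> \<pp>"
  using unit_iff[of "a * d - b * c"] intring_diff intring_mult
  by (auto simp: KK_def forall_2 det_mat2)

lemma Iwahori_mat2_iff: "mat2 a b c d \<in> Iwahori val \<longleftrightarrow> mat2 a b c d \<in> KK val \<and> c \<in> \<pp>"
  by (simp add: Iwahori_def)

lemma Iwahori1_mat2_iff:
  "mat2 a b c d \<in> Iwahori1 val \<longleftrightarrow> mat2 a b c d \<in> Iwahori val \<and> a - 1 \<in> \<pp> \<and> d - 1 \<in> \<pp>"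
  by (simp add: Iwahori1_def)

lemma Iwahori_mat2_entries:
  assumes "mat2 a b c d \<in> Iwahori val"
  shows "a \<in> \<oo>" "a \<notin> \<pp>" "b \<in> \<oo>" "c \<in> \<pp>" "d \<in> \<oo>" "d \<notin> \<pp>" "a * d - b * c \<notin> \<pp>"
proof -
  have e: "a \<in> \<oo>" "b \<in> \<oo>" "c \<in> \<pp>" "d \<in> \<oo>" "a * d - b * c \<notin> \<pp>"
    using assms by (auto simp: Iwahori_mat2_iff KK_mat2_iff)
  then have "a * d \<notin> \<pp>" using maxideal_diff maxideal_mult_left by blast
  then show "a \<notin> \<pp>" "d \<notin> \<pp>" using e maxideal_mult_left maxideal_mult_right by blast+
qed (use assms in \<open>auto simp: Iwahori_mat2_iff KK_mat2_iff\<close>)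

lemma Iwahori_mat2I:
  assumes "a \<in> \<oo>" "a \<notin> \<pp>" "d \<in> \<oo>" "d \<notin> \<pp>" "b \<in> \<oo>" "c \<in> \<pp>"
  shows "mat2 a b c d \<in> Iwahori val"
proof -
  have "a * d \<in> \<oo> \<and> a * d \<notin> \<pp>" using unit_mult assms by blast
  moreover have "b * c \<in> \<pp>" using assms maxideal_mult_left by blast
  ultimately have "a * d - b * c \<notin> \<pp>" using unit_diff_maxideal by blast
  then show ?thesis using assms maxideal_intring by (simp add: Iwahori_mat2_iff KK_mat2_iff)
qed

lemma Iwahori1_mat2I:
  assumes "a - 1 \<in> \<pp>" "d - 1 \<in> \<pp>" "b \<in> \<oo>" "c \<in> \<pp>"
  shows "mat2 a b c d \<in> Iwahori1 val"
  using Iwahori_mat2I[of a d b c] one_plus_maxideal_unit[OF assms(1)] one_plus_maxideal_unit[OF assms(2)]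
    assms by (simp add: Iwahori1_mat2_iff)

lemma KK_GL2: "g \<in> KK val \<Longrightarrow> g \<in> GL2"
  and Iwahori_KK: "g \<in> Iwahori val \<Longrightarrow> g \<in> KK val"
  and Iwahori1_Iwahori: "g \<in> Iwahori1 val \<Longrightarrow> g \<in> Iwahori val"
  by (simp_all add: KK_def GL2_def Iwahori_def Iwahori1_def)

lemma Iwahori_GL2: "g \<in> Iwahori val \<Longrightarrow> g \<in> GL2"
  by (simp add: KK_GL2 Iwahori_KK)

lemma umat_Iwahori1: "x \<in> \<oo> \<Longrightarrow> umat x \<in> Iwahori1 val"
  unfolding umat_def by (rule Iwahori1_mat2I) auto

lemma tmat_unif_GL2: "tmat unif \<in> GL2"
  using tmat_GL2 unif_nonzero by blast

lemma smat_KK: "smat \<in> KK val"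
  using minus_one_unit by (simp add: smat_def KK_mat2_iff)

lemma KK_mult: "g \<in> KK val \<Longrightarrow> h \<in> KK val \<Longrightarrow> g ** h \<in> KK val"
  unfolding KK_def by (auto simp: det_mul val_mult) (auto simp: matrix_matrix_mult_def intro!: intring_sum intring_mult)

lemma Iwahori_mult: "g \<in> Iwahori val \<Longrightarrow> h \<in> Iwahori val \<Longrightarrow> g ** h \<in> Iwahori val"
proof -
  assume g: "g \<in> Iwahori val" and h: "h \<in> Iwahori val"
  obtain a b c d a' b' c' d' where gh: "g = mat2 a b c d" "h = mat2 a' b' c' d'"
    using mat2_eta by metis
  then have "c * a' + d * c' \<in> \<pp>"
    using g h Iwahori_mat2_entries maxideal_mult_left maxideal_mult_right maxideal_add by metis
  then show ?thesis
    using KK_mult[OF Iwahori_KK[OF g] Iwahori_KK[OF h]] gh by (simp add: mat2_mult Iwahori_mat2_iff)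
qed

lemma KK_bruhat:
  assumes g: "g \<in> KK val" and "g \<notin> Iwahori val"
  obtains x b where "x \<in> \<oo>" "b \<in> Iwahori val" "g = umat x ** smat ** b"
proof -
  obtain a b c d where ge: "g = mat2 a b c d" using mat2_eta by blast
  have e: "a \<in> \<oo>" "b \<in> \<oo>" "c \<in> \<oo>" "d \<in> \<oo>" "a * d - b * c \<notin> \<pp>" "c \<notin> \<pp>"
    using assms ge by (auto simp: KK_mat2_iff Iwahori_mat2_iff)
  then have c0: "c \<noteq> 0" by auto
  have "- (a * d - b * c) * inverse c \<in> \<oo> \<and> - (a * d - b * c) * inverse c \<notin> \<pp>"
    using unit_mult unit_inverse[of c] e intring_minus maxideal_minus intring_diff intring_mult
    by (metis minus_minus)
  moreover have "b - a * d / c = - (a * d - b * c) * inverse c"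
    using c0 by (simp add: field_simps)
  ultimately have "mat2 c d 0 (b - a * d / c) \<in> Iwahori val"
    using Iwahori_mat2I[of c "b - a * d / c" d 0] e by simp
  moreover have "a / c \<in> \<oo>" using divide_unit_intring e by blast
  ultimately show thesis using that mat2_bruhat[OF c0, of a b d] ge by blast
qed

end

lemma (in vector_space) subspace_combinations: "subspace {y. \<exists>c. y = (\<Sum>i\<in>I. scale (c i) (f i))}"
  unfolding subspace_def
proof (intro conjI ballI allI)
  show "0 \<in> {y. \<exists>c. y = (\<Sum>i\<in>I. scale (c i) (f i))}" by (auto intro!: exI[of _ "\<lambda>_. 0"])
next
  fix x y assume "x \<in> {y. \<exists>c. y = (\<Sum>i\<in>I. scale (c i) (f i))}" "y \<in> {y. \<exists>c. y = (\<Sum>i\<in>I. scale (c i) (f i))}"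
  then obtain c d where "x = (\<Sum>i\<in>I. scale (c i) (f i))" "y = (\<Sum>i\<in>I. scale (d i) (f i))" by blast
  then have "x + y = (\<Sum>i\<in>I. scale (c i + d i) (f i))" by (simp add: sum.distrib scale_left_distrib)
  then show "x + y \<in> {y. \<exists>c. y = (\<Sum>i\<in>I. scale (c i) (f i))}"
    by (intro CollectI exI[of _ "\<lambda>i. c i + d i"])
next
  fix a x assume "x \<in> {y. \<exists>c. y = (\<Sum>i\<in>I. scale (c i) (f i))}"
  then obtain c where "x = (\<Sum>i\<in>I. scale (c i) (f i))" by blast
  then have "scale a x = (\<Sum>i\<in>I. scale (a * c i) (f i))" by (simp add: scale_sum_right)
  then show "scale a x \<in> {y. \<exists>c. y = (\<Sum>i\<in>I. scale (c i) (f i))}"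
    by (intro CollectI exI[of _ "\<lambda>i. a * c i"])
qed

lemma (in vector_space) subspace_scale_iff: "subspace U \<Longrightarrow> c \<noteq> 0 \<Longrightarrow> scale c x \<in> U \<longleftrightarrow> x \<in> U"
  using subspace_scale[of U "scale c x" "inverse c"] subspace_scale[of U x c] by auto

lemma (in vector_space) subspace_eq_if_dim_le:
  assumes "subspace U1" "U1 \<subseteq> U0" "U0 \<subseteq> span W" "finite W" "dim U0 \<le> dim U1"
  shows "U1 = U0"
proof (rule ccontr)
  assume "U1 \<noteq> U0"
  then obtain x where x: "x \<in> U0" "x \<notin> U1" using assms(2) by blast
  obtain B where B: "B \<subseteq> U1" "independent B" "U1 \<subseteq> span B" "card B = dim U1"
    using basis_exists by blast
  obtain B0 where B0: "B0 \<subseteq> U0" "independent B0" "U0 \<subseteq> span B0" "card B0 = dim U0"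
    using basis_exists by blast
  have "finite B0" using independent_span_bound[OF assms(4) B0(2)] B0(1) assms(3) by blast
  have "x \<notin> span B" using x span_minimal[OF B(1) assms(1)] by blast
  then have ind: "independent (insert x B)" "x \<notin> B" using independent_insertI[OF _ B(2)] span_base by auto
  moreover have "insert x B \<subseteq> span B0" using B(1) assms(2) x B0(3) by blast
  ultimately have "finite (insert x B)" "card (insert x B) \<le> card B0"
    using independent_span_bound[OF \<open>finite B0\<close> ind(1)] by auto
  then show False using B(4) B0(4) assms(5) \<open>x \<notin> B\<close> by simp
qed

locale Iwahori_eigen_rep = residue_embedding_field val unif \<iota>
  for val :: "'f::field \<Rightarrow> int" and unif :: 'f and \<iota> :: "'f set \<Rightarrow> 'k::field" +
  fixes sc :: "'k \<Rightarrow> 'v::ab_group_add \<Rightarrow> 'v" and \<rho> :: "'f^2^2 \<Rightarrow> 'v \<Rightarrow> 'v" and v :: 'v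
    and chr :: "'f^2^2 \<Rightarrow> 'k"
  assumes rep: "smooth_rep val sc \<rho>"
    and v_inv: "v \<in> invariants \<rho> (Iwahori1 val)"
    and v_nz: "v \<noteq> 0"
    and chi_char: "\<forall>g\<in>Iwahori val. \<forall>h\<in>Iwahori val. chr (g ** h) = chr g * chr h"
    and chi_nz: "\<forall>g\<in>Iwahori val. chr g \<noteq> 0"
    and v_chi: "\<forall>g\<in>Iwahori val. \<rho> g v = sc (chr g) v"
begin

sublocale V: vector_space sc
  using rep by (simp add: smooth_rep_def)

lemma rho_add: "g \<in> GL2 \<Longrightarrow> \<rho> g (x + y) = \<rho> g x + \<rho> g y"
  and rho_scale: "g \<in> GL2 \<Longrightarrow> \<rho> g (sc c x) = sc c (\<rho> g x)"
  using rep unfolding smooth_rep_def Vector_Spaces.linear_iff by blast+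

lemma rho_zero: "g \<in> GL2 \<Longrightarrow> \<rho> g 0 = 0"
  using rho_scale[of g 0 0] by simp

lemma rho_diff: "g \<in> GL2 \<Longrightarrow> \<rho> g (x - y) = \<rho> g x - \<rho> g y"
  using rho_add[of g x "- y"] rho_scale[of g "- 1" y] by simp

lemma rho_sum: "g \<in> GL2 \<Longrightarrow> \<rho> g (sum f A) = (\<Sum>a\<in>A. \<rho> g (f a))"
  by (induction A rule: infinite_finite_induct) (auto simp: rho_zero rho_add)

lemma rho_mult: "g \<in> GL2 \<Longrightarrow> h \<in> GL2 \<Longrightarrow> \<rho> (g ** h) x = \<rho> g (\<rho> h x)"
  and rho_one: "\<rho> (mat 1) x = x"
  using rep by (simp_all add: smooth_rep_def)

lemma v_fixed: "g \<in> Iwahori1 val \<Longrightarrow> \<rho> g v = v"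
  and rho_Iwahori_v: "g \<in> Iwahori val \<Longrightarrow> \<rho> g v = sc (chr g) v"
  and chr_mult: "g \<in> Iwahori val \<Longrightarrow> h \<in> Iwahori val \<Longrightarrow> chr (g ** h) = chr g * chr h"
  and chr_nonzero: "g \<in> Iwahori val \<Longrightarrow> chr g \<noteq> 0"
  using v_inv v_chi chi_char chi_nz by (auto simp: invariants_def)

lemma chr_Iwahori1: "g \<in> Iwahori1 val \<Longrightarrow> chr g = 1"
  using v_fixed[of g] rho_Iwahori_v[of g] Iwahori1_Iwahori v_nz V.scale_cancel_right[of "chr g" v 1]
  by simp

text \<open>By \<open>rho_umat_tv\<close>, \<open>ev z\<close> does not depend on the choice of the lift of \<open>z\<close>.\<close>

definition tv where "tv = \<rho> (tmat unif) v"
definition ev where "ev z = \<rho> (umat (lift z)) tv"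
definition einf where "einf = \<rho> smat tv"

lemma tv_nonzero: "tv \<noteq> 0"
proof
  assume "tv = 0"
  have "tmat (1 / unif) \<in> GL2" by (rule tmat_GL2) (simp add: unif_nonzero)
  then have "\<rho> (tmat (1 / unif) ** tmat unif) v = 0"
    using \<open>tv = 0\<close> by (simp add: rho_mult tv_def rho_zero tmat_unif_GL2)
  then show False using v_nz unif_nonzero by (simp add: tmat_inverse rho_one)
qed

lemma rho_umat_tv: "x \<in> \<oo> \<Longrightarrow> \<rho> (umat x) tv = ev (red x)"
proof -
  assume x: "x \<in> \<oo>"
  define z where "z = lift (red x)"
  have z: "z \<in> \<oo>" "red z = red x" using red_in_Fq[OF x] by (simp_all add: z_def lift_intring)
  then have "(x - z) / unif \<in> \<oo>" using red_eq_iff[OF x z(1)] divide_unif_intring by simp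
  then have "\<rho> (tmat unif) (\<rho> (umat ((x - z) / unif)) v) = tv"
    using v_fixed[OF umat_Iwahori1] by (simp add: tv_def)
  moreover have "\<rho> (umat x) tv = \<rho> (umat x ** tmat unif) v"
    by (simp add: tv_def rho_mult umat_GL2 tmat_unif_GL2)
  then have "\<rho> (umat x) tv = \<rho> (umat z ** tmat unif ** umat ((x - z) / unif)) v"
    using umat_tmat_recentre[OF unif_nonzero, of x z] by simp
  ultimately show ?thesis
    by (simp add: ev_def z_def rho_mult umat_GL2 tmat_unif_GL2 GL2_mult)
qed

lemma ev_zero: "ev 0 = tv"
  using rho_umat_tv[of 0] by (simp add: umat_def mat_1_eq_mat2[symmetric] rho_one)

lemma rho_Iwahori_ev:
  assumes g: "mat2 a b c d \<in> Iwahori val" and z: "z \<in> Fq"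
  defines "y \<equiv> (a * lift z + b) / (c * lift z + d)"
  defines "h \<equiv> mat2 (a - y * c) 0 (c * unif) (c * lift z + d)"
  shows "\<rho> (mat2 a b c d) (ev z) = sc (chr h) (ev ((red a * z + red b) / red d))"
    and "h \<in> Iwahori val"
    and "mat2 a b c d \<in> Iwahori1 val \<Longrightarrow> h \<in> Iwahori1 val"
    and "det h = a * d - b * c"
proof -
  note e = Iwahori_mat2_entries[OF g]
  have x: "lift z \<in> \<oo>" using lift_intring[OF z] .
  have cx: "c * lift z \<in> \<pp>" using maxideal_mult_right e x by blast
  have den: "c * lift z + d \<in> \<oo>" "c * lift z + d \<notin> \<pp>"
    using unit_add_maxideal[OF e(5,6) cx] by (auto simp: add.commute)
  have num: "a * lift z + b \<in> \<oo>" using e x by (auto intro: intring_add intring_mult)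
  have y: "y \<in> \<oo>" unfolding y_def using divide_unit_intring num den by blast
  have yc: "y * c \<in> \<pp>" using maxideal_mult_left[OF y e(4)] .
  have cp: "c * unif \<in> \<pp>" using mult_unif_maxideal e(4) maxideal_intring by blast
  show hI: "h \<in> Iwahori val"
    unfolding h_def using unit_diff_maxideal[OF e(1,2) yc] den cp by (intro Iwahori_mat2I) auto
  show "h \<in> Iwahori1 val" if "mat2 a b c d \<in> Iwahori1 val"
  proof -
    have a1: "a - 1 \<in> \<pp>" "d - 1 \<in> \<pp>" using that by (auto simp: Iwahori1_mat2_iff)
    have "a - y * c - 1 \<in> \<pp>" "c * lift z + d - 1 \<in> \<pp>"
      using maxideal_diff[OF a1(1) yc] maxideal_add[OF cx a1(2)] by (simp_all add: algebra_simps)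
    then show ?thesis unfolding h_def using cp by (intro Iwahori1_mat2I) auto
  qed
  have nz: "c * lift z + d \<noteq> 0" using unit_nonzero den by blast
  show "det h = a * d - b * c" unfolding h_def y_def det_mat2 using nz
    by (simp add: field_simps)
  have ry: "red y = (red a * z + red b) / red d"
    using red_divide[OF num den] red_add red_mult e x z red_eq_0_iff[of c] intring_mult
    by (simp add: y_def maxideal_intring)
  have "\<rho> (mat2 a b c d) (ev z) = \<rho> (mat2 a b c d ** umat (lift z) ** tmat unif) v"
    using Iwahori_GL2[OF g] by (simp add: ev_def tv_def rho_mult umat_GL2 tmat_unif_GL2 GL2_mult)
  also have "mat2 a b c d ** umat (lift z) ** tmat unif = umat y ** tmat unif ** h"
    unfolding h_def by (rule mat2_umat_tmat[OF nz]) (simp add: y_def)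
  also have "\<rho> (umat y ** tmat unif ** h) v = \<rho> (umat y) (\<rho> (tmat unif) (\<rho> h v))"
    using Iwahori_GL2[OF hI] by (simp add: rho_mult umat_GL2 tmat_unif_GL2 GL2_mult)
  finally show "\<rho> (mat2 a b c d) (ev z) = sc (chr h) (ev ((red a * z + red b) / red d))"
    using rho_Iwahori_v[OF hI] rho_umat_tv[OF y] ry by (simp add: tv_def rho_scale umat_GL2 tmat_unif_GL2)
qed

lemma rho_Iwahori_einf:
  assumes g: "mat2 a b c d \<in> Iwahori val"
  defines "h \<equiv> mat2 d (c / unif) (b * unif) a"
  shows "\<rho> (mat2 a b c d) einf = sc (chr h) einf"
    and "h \<in> Iwahori val"
    and "mat2 a b c d \<in> Iwahori1 val \<Longrightarrow> h \<in> Iwahori1 val"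
    and "det h = a * d - b * c"
proof -
  note e = Iwahori_mat2_entries[OF g]
  have c': "c / unif \<in> \<oo>" using divide_unif_intring e by blast
  have b': "b * unif \<in> \<pp>" using mult_unif_maxideal e by blast
  show hI: "h \<in> Iwahori val" unfolding h_def using Iwahori_mat2I[OF e(5,6,1,2) c' b'] .
  show "mat2 a b c d \<in> Iwahori1 val \<Longrightarrow> h \<in> Iwahori1 val"
    unfolding h_def by (rule Iwahori1_mat2I) (auto simp: Iwahori1_mat2_iff c' b')
  show "det h = a * d - b * c" unfolding h_def det_mat2 using unif_nonzero by (simp add: algebra_simps)
  have "\<rho> (mat2 a b c d) einf = \<rho> (mat2 a b c d ** smat ** tmat unif) v"
    using Iwahori_GL2[OF g] by (simp add: einf_def tv_def rho_mult smat_GL2 tmat_unif_GL2 GL2_mult)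
  also have "\<dots> = \<rho> (smat ** tmat unif ** h) v"
    using mat2_smat_tmat[OF unif_nonzero] by (simp add: h_def)
  also have "\<dots> = \<rho> smat (\<rho> (tmat unif) (\<rho> h v))"
    using Iwahori_GL2[OF hI] by (simp add: rho_mult smat_GL2 tmat_unif_GL2 GL2_mult)
  finally show "\<rho> (mat2 a b c d) einf = sc (chr h) einf"
    using rho_Iwahori_v[OF hI] by (simp add: einf_def tv_def rho_scale smat_GL2 tmat_unif_GL2)
qed

lemma rho_smat_ev_zero: "\<rho> smat (ev 0) = einf"
  by (simp add: ev_zero einf_def)

lemma rho_smat_einf: "\<rho> smat einf = ev 0"
  by (simp add: ev_zero einf_def rho_mult[symmetric] smat_GL2 smat_smat rho_one)

lemma rho_smat_ev:
  assumes z: "z \<in> Fq" "z \<noteq> 0"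
  defines "h \<equiv> mat2 (- 1 / lift z) 0 unif (lift z)"
  shows "\<rho> smat (ev z) = sc (chr h) (ev (1 / z))" and "h \<in> Iwahori val" and "det h = - 1"
proof -
  have x: "lift z \<in> \<oo>" "lift z \<notin> \<pp>" "lift z \<noteq> 0"
    using lift_intring lift_unit unit_nonzero z by auto
  have "- 1 / lift z \<in> \<oo> \<and> - 1 / lift z \<notin> \<pp>"
    using unit_mult[of "- 1" "inverse (lift z)"] minus_one_unit unit_inverse[OF x(1,2)]
    by (simp add: divide_inverse)
  then show hI: "h \<in> Iwahori val" unfolding h_def using x unif_maxideal by (intro Iwahori_mat2I) auto
  show "det h = - 1" unfolding h_def det_mat2 using x by simp
  have "\<rho> smat (ev z) = \<rho> (smat ** umat (lift z) ** tmat unif) v"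
    by (simp add: ev_def tv_def rho_mult smat_GL2 umat_GL2 tmat_unif_GL2 GL2_mult)
  also have "\<dots> = \<rho> (umat (1 / lift z) ** tmat unif ** h) v"
    using smat_umat_tmat[OF x(3)] by (simp add: h_def)
  also have "\<dots> = sc (chr h) (\<rho> (umat (1 / lift z)) tv)"
    using Iwahori_GL2[OF hI] rho_Iwahori_v[OF hI]
    by (simp add: rho_mult umat_GL2 tmat_unif_GL2 GL2_mult tv_def rho_scale)
  also have "\<rho> (umat (1 / lift z)) tv = ev (1 / z)"
    using rho_umat_tv divide_unit_intring[OF intring_one x(1,2)] red_divide[OF intring_one x(1,2)] z
    by simp
  finally show "\<rho> smat (ev z) = sc (chr h) (ev (1 / z))" .
qed

definition stable :: "('f^2^2) set \<Rightarrow> 'v set \<Rightarrow> bool" where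
  "stable H U \<longleftrightarrow> (\<forall>g\<in>H. \<forall>u\<in>U. \<rho> g u \<in> U)"

lemma stable_KK_if_Iwahori_smat:
  assumes "stable (Iwahori val) W" and "\<And>w. w \<in> W \<Longrightarrow> \<rho> smat w \<in> W"
  shows "stable (KK val) W"
  unfolding stable_def
proof (intro ballI)
  fix g w assume g: "g \<in> KK val" and w: "w \<in> W"
  show "\<rho> g w \<in> W"
  proof (cases "g \<in> Iwahori val")
    case False
    then obtain x b where xb: "x \<in> \<oo>" "b \<in> Iwahori val" "g = umat x ** smat ** b"
      using KK_bruhat g by blast
    then have "\<rho> g w = \<rho> (umat x) (\<rho> smat (\<rho> b w))"
      by (simp add: rho_mult umat_GL2 smat_GL2 Iwahori_GL2 GL2_mult)
    then show ?thesis
      using assms xb w Iwahori1_Iwahori[OF umat_Iwahori1] unfolding stable_def by simp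
  qed (use assms w in \<open>auto simp: stable_def\<close>)
qed


definition w :: "nat \<Rightarrow> 'v" where "w j = (\<Sum>z\<in>Fq. sc (z ^ j) (ev z))"

abbreviation translate :: "'k \<Rightarrow> 'v \<Rightarrow> 'v" where "translate \<xi> \<equiv> \<rho> (umat (lift \<xi>))"

definition alg_act :: "('i \<Rightarrow> 'k) \<Rightarrow> ('i \<Rightarrow> 'f^2^2) \<Rightarrow> 'i set \<Rightarrow> 'v \<Rightarrow> 'v" where
  "alg_act c g I y = (\<Sum>i\<in>I. sc (c i) (\<rho> (g i) y))"

lemma alg_act_add: "g ` I \<subseteq> GL2 \<Longrightarrow> alg_act c g I (x + y) = alg_act c g I x + alg_act c g I y"
  unfolding alg_act_def sum.distrib[symmetric]
  by (rule sum.cong) (auto simp: rho_add V.scale_right_distrib)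

lemma alg_act_scale: "g ` I \<subseteq> GL2 \<Longrightarrow> alg_act c g I (sc a x) = sc a (alg_act c g I x)"
  unfolding alg_act_def V.scale_sum_right
  by (rule sum.cong) (auto simp: rho_scale mult.commute)

lemma alg_act_zero: "g ` I \<subseteq> GL2 \<Longrightarrow> alg_act c g I 0 = 0"
  unfolding alg_act_def by (rule sum.neutral) (auto simp: rho_zero)

lemma alg_act_sum: "g ` I \<subseteq> GL2 \<Longrightarrow> alg_act c g I (sum f S) = (\<Sum>s\<in>S. alg_act c g I (f s))"
  by (induction S rule: infinite_finite_induct) (simp_all add: alg_act_add alg_act_zero)

lemma alg_act_stable:
  "stable H U \<Longrightarrow> V.subspace U \<Longrightarrow> g ` I \<subseteq> H \<Longrightarrow> u \<in> U \<Longrightarrow> alg_act c g I u \<in> U"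
  unfolding alg_act_def stable_def by (auto intro!: V.subspace_sum V.subspace_scale)

abbreviation avg :: "nat \<Rightarrow> 'v \<Rightarrow> 'v" where
  "avg m \<equiv> alg_act (\<lambda>\<xi>. \<xi> ^ m) (\<lambda>\<xi>. umat (lift \<xi>)) Fq"

lemma umat_lift_GL2: "(\<lambda>\<xi>. umat (lift \<xi>)) ` I \<subseteq> GL2"
  using umat_GL2 by blast

lemma umat_lift_Iwahori: "(\<lambda>\<xi>. umat (lift \<xi>)) ` Fq \<subseteq> Iwahori val"
  using Iwahori1_Iwahori[OF umat_Iwahori1[OF lift_intring]] by blast

lemma translate_ev: "\<xi> \<in> Fq \<Longrightarrow> z \<in> Fq \<Longrightarrow> translate \<xi> (ev z) = ev (z + \<xi>)"
  using rho_umat_tv[OF intring_add[OF lift_intring lift_intring], of \<xi> z]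
  by (simp add: ev_def rho_mult[symmetric] umat_GL2 umat_add red_add lift_intring add.commute)

lemma translate_einf: "\<xi> \<in> Fq \<Longrightarrow> translate \<xi> einf = einf"
proof -
  assume "\<xi> \<in> Fq"
  then have g: "mat2 1 (lift \<xi>) 0 1 \<in> Iwahori1 val" using umat_Iwahori1[OF lift_intring] by (simp add: umat_def)
  then show ?thesis
    using rho_Iwahori_einf[OF Iwahori1_Iwahori[OF g]] chr_Iwahori1 by (simp add: umat_def)
qed

lemma translate_sum_ev:
  "\<xi> \<in> Fq \<Longrightarrow> translate \<xi> (\<Sum>z\<in>Fq. sc (f z) (ev z)) = (\<Sum>z\<in>Fq. sc (f (z - \<xi>)) (ev z))"
  using Fq.sum_translate[of \<xi> "\<lambda>u. sc (f (u - \<xi>)) (ev u)"]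
  by (simp add: rho_sum rho_scale umat_GL2 translate_ev)

lemma sum_ev_binomial:
  "(\<Sum>z\<in>Fq. sc ((z + c) ^ n) (ev z)) = (\<Sum>k\<le>n. sc (of_nat (n choose k) * c ^ (n - k)) (w k))"
proof -
  have "(\<Sum>z\<in>Fq. sc ((z + c) ^ n) (ev z))
      = (\<Sum>z\<in>Fq. \<Sum>k\<le>n. sc (of_nat (n choose k) * c ^ (n - k)) (sc (z ^ k) (ev z)))"
    by (simp add: binomial_ring V.scale_sum_left mult_ac)
  then show ?thesis by (subst (asm) sum.swap) (simp add: w_def V.scale_sum_right)
qed

lemma translate_w:
  "\<xi> \<in> Fq \<Longrightarrow> translate \<xi> (w j) = (\<Sum>k\<le>j. sc (of_nat (j choose k) * (- \<xi>) ^ (j - k)) (w k))"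
  using translate_sum_ev[of \<xi> "\<lambda>z. z ^ j"] sum_ev_binomial[of "- \<xi>" j] by (simp add: w_def)

text \<open>Averaging against \<open>\<xi>\<^sup>m\<close> turns the binomial expansion of \<open>translate \<xi> (w j)\<close> into power
  sums over \<open>Fq\<close>, which almost all vanish.\<close>

lemma avg_w:
  "avg m (w j) = (\<Sum>k\<le>j. sc (of_nat (j choose k) * (- 1) ^ (j - k) * (\<Sum>\<xi>\<in>Fq. \<xi> ^ (m + (j - k)))) (w k))"
proof -
  have "avg m (w j) = (\<Sum>\<xi>\<in>Fq. \<Sum>k\<le>j. sc (\<xi> ^ m * (of_nat (j choose k) * (- \<xi>) ^ (j - k))) (w k))"
    by (simp add: alg_act_def translate_w V.scale_sum_right)
  also have "\<dots> = (\<Sum>k\<le>j. \<Sum>\<xi>\<in>Fq. sc (of_nat (j choose k) * (- 1) ^ (j - k) * \<xi> ^ (m + (j - k))) (w k))"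
  proof (subst sum.swap, intro sum.cong refl)
    fix k and \<xi> :: 'k
    have "(- \<xi>) ^ (j - k) = (- 1) ^ (j - k) * \<xi> ^ (j - k)" by (simp flip: power_mult_distrib)
    then show "sc (\<xi> ^ m * (of_nat (j choose k) * (- \<xi>) ^ (j - k))) (w k)
        = sc (of_nat (j choose k) * (- 1) ^ (j - k) * \<xi> ^ (m + (j - k))) (w k)"
      by (simp only: power_add mult_ac)
  qed
  finally show ?thesis
    by (simp add: V.scale_sum_left[symmetric] sum_distrib_left)
qed

lemma sum_powers_shifted:
  assumes "k0 \<le> q - 2" "k0 \<le> j" "j \<le> q - 1" "k \<le> j"
  shows "(\<Sum>\<xi>\<in>Fq. \<xi> ^ ((q - 1 + k0 - j) + (j - k))) = (if k = k0 then - 1 else 0)"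
proof -
  define n where "n = (q - 1 + k0 - j) + (j - k)"
  have n: "n = q - 1 + k0 - k" using assms Fq.card_ge_2 unfolding n_def by simp
  have "0 < n \<and> (q - 1) dvd n \<longleftrightarrow> k = k0"
  proof (cases "k < k0")
    case True
    then have "(q - 1) dvd n \<Longrightarrow> (q - 1) dvd (n - (q - 1))" by (simp add: dvd_diff_nat)
    moreover have "0 < n - (q - 1)" "n - (q - 1) < q - 1" using n True assms by auto
    ultimately have "\<not> (q - 1) dvd n" using dvd_imp_le by fastforce
    then show ?thesis using True by simp
  next
    case False
    then show ?thesis using n assms Fq.card_ge_2 by (auto dest: dvd_imp_le)
  qed
  then show ?thesis using Fq.sum_powers[of n] unfolding n_def by simp
qed

lemma avg_w_lower:
  assumes "k0 \<le> q - 2" "k0 \<le> j" "j \<le> q - 1"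
  shows "avg (q - 1 + k0 - j) (w j) = sc (- (of_nat (j choose k0) * (- 1) ^ (j - k0))) (w k0)"
proof -
  have "avg (q - 1 + k0 - j) (w j)
      = (\<Sum>k\<le>j. sc (of_nat (j choose k) * (- 1) ^ (j - k) * (if k = k0 then - 1 else 0)) (w k))"
    unfolding avg_w using sum_powers_shifted[OF assms] by simp
  also have "\<dots> = (\<Sum>k\<in>{k0}. sc (of_nat (j choose k) * (- 1) ^ (j - k) * (if k = k0 then - 1 else 0)) (w k))"
    by (rule sum.mono_neutral_right) (use assms in auto)
  finally show ?thesis by simp
qed

definition dmat :: "'k \<Rightarrow> 'f^2^2" where "dmat m = mat2 (lift m) 0 0 1"

lemma dmat_Iwahori: "m \<in> Fq - {0} \<Longrightarrow> dmat m \<in> Iwahori val"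
  unfolding dmat_def by (rule Iwahori_mat2I) (auto simp: lift_intring lift_unit)

lemma dmat_GL2: "dmat ` (Fq - {0}) \<subseteq> GL2"
  using dmat_Iwahori Iwahori_GL2 by blast

lemma rho_dmat_w: "m \<in> Fq - {0} \<Longrightarrow> \<rho> (dmat m) (w i) = sc (chr (dmat m) * inverse m ^ i) (w i)"
proof -
  assume m: "m \<in> Fq - {0}"
  have "\<rho> (dmat m) (ev z) = sc (chr (dmat m)) (ev (m * z))" if "z \<in> Fq" for z
    using rho_Iwahori_ev(1)[OF dmat_Iwahori[OF m, unfolded dmat_def] that] m
    by (simp add: dmat_def lift_intring)
  then have "\<rho> (dmat m) (w i) = sc (chr (dmat m)) (\<Sum>z\<in>Fq. sc (z ^ i) (ev (m * z)))"
    using Iwahori_GL2[OF dmat_Iwahori[OF m]] by (simp add: w_def rho_sum rho_scale V.scale_sum_right mult.commute)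
  also have "(\<Sum>z\<in>Fq. sc (z ^ i) (ev (m * z))) = (\<Sum>u\<in>Fq. sc (inverse m ^ i * u ^ i) (ev u))"
    using Fq.sum_scale[of m "\<lambda>u. sc (inverse m ^ i * u ^ i) (ev u)"] m
    by (simp add: power_mult_distrib[symmetric] mult.assoc[symmetric])
  finally show ?thesis by (simp add: w_def V.scale_sum_right mult.assoc)
qed

abbreviation torus_proj :: "nat \<Rightarrow> 'v \<Rightarrow> 'v" where
  "torus_proj k \<equiv> alg_act (\<lambda>m. m ^ k / chr (dmat m)) dmat (Fq - {0})"

lemma torus_proj_w: "torus_proj k (w i) = sc (if (q - 1) dvd (k + (q - 2) * i) then - 1 else 0) (w i)"
proof -
  have "torus_proj k (w i) = (\<Sum>m\<in>Fq - {0}. sc (m ^ (k + (q - 2) * i)) (w i))"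
    unfolding alg_act_def
  proof (rule sum.cong)
    fix m assume m: "m \<in> Fq - {0}"
    then have "m ^ k / chr (dmat m) * (chr (dmat m) * inverse m ^ i) = m ^ (k + (q - 2) * i)"
      using chr_nonzero[OF dmat_Iwahori] Fq.inverse_eq_power[of m] by (simp add: power_add power_mult)
    then show "sc (m ^ k / chr (dmat m)) (\<rho> (dmat m) (w i)) = sc (m ^ (k + (q - 2) * i)) (w i)"
      using rho_dmat_w[OF m] by simp
  qed simp
  then show ?thesis using Fq.sum_powers_nonzero by (simp add: V.scale_sum_left[symmetric])
qed

lemma card_minus_1_dvd_iff:
  assumes "1 \<le> k" "k \<le> q - 2" "i \<le> q - 1"
  shows "(q - 1) dvd (k + (q - 2) * i) \<longleftrightarrow> i = k"
proof -
  have "int (q - 2) = int q - 2" "int (q - 1) = int q - 1" using Fq.card_ge_2 by auto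
  then have e: "int (k + (q - 2) * i) = (int k - int i) + int (q - 1) * int i"
    by (simp only: of_nat_add of_nat_mult) (simp add: algebra_simps)
  have "(q - 1) dvd (k + (q - 2) * i) \<longleftrightarrow> int (q - 1) dvd int (k + (q - 2) * i)"
    by (simp only: of_nat_dvd_iff)
  also have "\<dots> \<longleftrightarrow> int (q - 1) dvd (int k - int i)"
    unfolding e by (simp add: dvd_add_left_iff)
  also have "\<dots> \<longleftrightarrow> i = k"
    using dvd_imp_le_int[of "int k - int i" "int (q - 1)"] assms by (cases "i = k") auto
  finally show ?thesis .
qed

lemma torus_proj_w_middle:
  "1 \<le> k \<Longrightarrow> k \<le> q - 2 \<Longrightarrow> i < q \<Longrightarrow> torus_proj k (w i) = (if i = k then - w i else 0)"
  using torus_proj_w[of k i] card_minus_1_dvd_iff[of k i] by auto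

lemma rho_Iwahori1_ev: "g \<in> Iwahori1 val \<Longrightarrow> z \<in> Fq \<Longrightarrow> \<rho> g (ev z) = ev (z + red (g$1$2))"
proof -
  assume g: "g \<in> Iwahori1 val" and z: "z \<in> Fq"
  obtain a b c d where ge: "g = mat2 a b c d" using mat2_eta by blast
  then have gI: "mat2 a b c d \<in> Iwahori1 val" using g by simp
  note e = Iwahori_mat2_entries[OF Iwahori1_Iwahori[OF gI]]
  have "red a = 1" "red d = 1" using red_eq_iff[of _ 1] gI e by (auto simp: Iwahori1_mat2_iff)
  then show ?thesis
    using rho_Iwahori_ev(1,3)[OF Iwahori1_Iwahori[OF gI] z] gI chr_Iwahori1 ge by simp
qed

lemma w_Iwahori1_invariant:
  assumes "\<And>\<xi>. \<xi> \<in> Fq \<Longrightarrow> translate \<xi> (w j) = w j"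
  shows "w j \<in> invariants \<rho> (Iwahori1 val)"
proof -
  have "\<rho> g (w j) = w j" if g: "g \<in> Iwahori1 val" for g
  proof -
    have G: "g \<in> GL2" using g Iwahori1_Iwahori Iwahori_GL2 by blast
    have b: "red (g$1$2) \<in> Fq" using g red_in_Fq by (auto simp: Iwahori1_def Iwahori_def KK_def)
    have "\<rho> g (w j) = (\<Sum>z\<in>Fq. sc (z ^ j) (ev (z + red (g$1$2))))"
      by (simp add: w_def rho_sum rho_scale G rho_Iwahori1_ev g)
    also have "\<dots> = translate (red (g$1$2)) (w j)"
      using b by (simp add: w_def rho_sum rho_scale umat_GL2 translate_ev)
    finally show ?thesis using assms b by simp
  qed
  then show ?thesis by (simp add: invariants_def)
qed


lemma stable_Iwahori: "stable (KK val) U \<Longrightarrow> stable (Iwahori val) U"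
  using Iwahori_KK by (auto simp: stable_def)

lemma stable_translate: "stable (KK val) U \<Longrightarrow> \<xi> \<in> Fq \<Longrightarrow> u \<in> U \<Longrightarrow> translate \<xi> u \<in> U"
  unfolding stable_def using Iwahori_KK umat_lift_Iwahori by blast

lemma stable_avg: "stable (KK val) U \<Longrightarrow> V.subspace U \<Longrightarrow> u \<in> U \<Longrightarrow> avg m u \<in> U"
  by (rule alg_act_stable[OF stable_Iwahori _ umat_lift_Iwahori])

lemma stable_torus_proj: "stable (KK val) U \<Longrightarrow> V.subspace U \<Longrightarrow> u \<in> U \<Longrightarrow> torus_proj k u \<in> U"
  by (rule alg_act_stable[OF stable_Iwahori]) (use dmat_Iwahori in auto)

section \<open>The subspaces \<open>Vaff\<close> and \<open>Vind\<close>\<close>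

text \<open>\<open>Vind\<close> is spanned by the vectors at all points of \<open>\<bbbP>\<^sup>1(\<bbbF>\<^sub>q)\<close> (it is a quotient of
  the induced representation \<open>ind\<^sub>I\<^sup>K\<close>), \<open>Vaff\<close> by those at the affine points.\<close>

definition Vaff :: "'v set" where "Vaff = {y. \<exists>a. y = (\<Sum>z\<in>Fq. sc (a z) (ev z))}"
definition Vind :: "'v set" where "Vind = {y. \<exists>a b. y = (\<Sum>z\<in>Fq. sc (a z) (ev z)) + sc b einf}"

lemma Vaff_subspace: "V.subspace Vaff"
  unfolding Vaff_def by (rule V.subspace_combinations)

lemma Vaff_sum: "(\<And>i. i \<in> S \<Longrightarrow> f i \<in> Fq) \<Longrightarrow> (\<Sum>i\<in>S. sc (c i) (ev (f i))) \<in> Vaff"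
proof (intro V.subspace_sum[OF Vaff_subspace] V.subspace_scale[OF Vaff_subspace])
  fix i assume "i \<in> S" "\<And>i. i \<in> S \<Longrightarrow> f i \<in> Fq"
  then have "f i \<in> Fq" by blast
  have "(\<Sum>z\<in>Fq. sc (if z = f i then 1 else 0) (ev z)) = (\<Sum>z\<in>Fq. if z = f i then ev z else 0)"
    by (rule sum.cong) auto
  then have "ev (f i) = (\<Sum>z\<in>Fq. sc (if z = f i then 1 else 0) (ev z))"
    using Fq.finite_S \<open>f i \<in> Fq\<close> by (simp add: sum.delta')
  then show "ev (f i) \<in> Vaff"
    unfolding Vaff_def by (intro CollectI exI[of _ "\<lambda>z. if z = f i then 1 else 0"])
qed

lemma ev_Vaff: "z \<in> Fq \<Longrightarrow> ev z \<in> Vaff"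
  using Vaff_sum[of "{z}" "\<lambda>_. z" "\<lambda>_. 1"] by simp

lemma w_Vaff: "w j \<in> Vaff"
  unfolding w_def by (rule Vaff_sum) auto

lemma tv_Vaff: "tv \<in> Vaff"
  using ev_Vaff[OF Fq.zero_mem] ev_zero by simp

lemma sum_ev_indicator:
  assumes "\<mu> \<in> Fq"
  shows "(\<Sum>z\<in>Fq. sc ((z - \<mu>) ^ (q - 1)) (ev z)) = w 0 - ev \<mu>"
proof -
  have "(z - \<mu>) ^ (q - 1) = (if z = \<mu> then 0 else 1)" if "z \<in> Fq" for z
    using Fq.power_card_minus_1[of "z - \<mu>"] Fq.diff_mem[OF that assms] Fq.card_ge_2 by auto
  then show ?thesis
    using sum.remove[OF Fq.finite_S assms, of ev]
      sum.remove[OF Fq.finite_S assms, of "\<lambda>z. sc ((z - \<mu>) ^ (q - 1)) (ev z)"]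
    using Fq.card_ge_2 by (simp add: w_def)
qed

lemma ev_eq_w_combination:
  assumes "\<mu> \<in> Fq"
  shows "ev \<mu> = w 0 - (\<Sum>k\<le>q - 1. sc (of_nat ((q - 1) choose k) * (- \<mu>) ^ (q - 1 - k)) (w k))"
  using sum_ev_indicator[OF assms] sum_ev_binomial[of "- \<mu>" "q - 1"] by (simp add: algebra_simps)

lemma Vaff_w_expansion:
  assumes "y \<in> Vaff"
  obtains c where "y = (\<Sum>k<q. sc (c k) (w k))"
proof -
  let ?W = "{y. \<exists>c. y = (\<Sum>k<q. sc (c k) (w k))}"
  have W: "V.subspace ?W" by (rule V.subspace_combinations)
  have w: "w k \<in> ?W" if "k < q" for k
  proof -
    have "(\<Sum>i<q. sc (if i = k then 1 else 0) (w i)) = (\<Sum>i<q. if i = k then w i else 0)"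
      by (rule sum.cong) auto
    then have "w k = (\<Sum>i<q. sc (if i = k then 1 else 0) (w i))"
      using that by (simp add: sum.delta')
    then show ?thesis by (intro CollectI exI[of _ "\<lambda>i. if i = k then 1 else 0"])
  qed
  have "ev \<mu> \<in> ?W" if "\<mu> \<in> Fq" for \<mu>
  proof -
    have "{..q - 1} = {..<q}" using Fq.card_ge_2 by auto
    then have "(\<Sum>k\<le>q - 1. sc (of_nat ((q - 1) choose k) * (- \<mu>) ^ (q - 1 - k)) (w k)) \<in> ?W"
      by (simp only:) (rule V.subspace_sum[OF W], rule V.subspace_scale[OF W], rule w, simp)
    then show ?thesis
      using ev_eq_w_combination[OF that] V.subspace_diff[OF W w[of 0]] Fq.card_ge_2 by simp
  qed
  moreover obtain a where "y = (\<Sum>z\<in>Fq. sc (a z) (ev z))" using assms by (auto simp: Vaff_def)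
  ultimately have "y \<in> ?W"
    by (simp only:) (rule V.subspace_sum[OF W], rule V.subspace_scale[OF W])
  then show thesis using that by blast
qed

lemma Vind_subspace: "V.subspace Vind"
proof -
  have "Vind = {x + y |x y. x \<in> Vaff \<and> y \<in> V.span {einf}}"
    by (auto simp: Vind_def Vaff_def V.span_singleton)
  then show ?thesis using V.subspace_sums[OF Vaff_subspace V.subspace_span] by simp
qed

lemma Vaff_subset_Vind: "Vaff \<subseteq> Vind"
  unfolding Vaff_def Vind_def by (auto intro!: exI[of _ 0])

lemma einf_Vind: "einf \<in> Vind"
  unfolding Vind_def by (auto intro!: exI[of _ "\<lambda>_. 0"] exI[of _ 1])

lemma Vind_cases:
  assumes "y \<in> Vind"
  obtains e b where "e \<in> Vaff" "y = e + sc b einf"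
  using assms unfolding Vind_def Vaff_def by blast

lemma Vind_subset_span: "Vind \<subseteq> V.span (insert einf (ev ` Fq))"
proof
  fix y assume "y \<in> Vind"
  then obtain a b where y: "y = (\<Sum>z\<in>Fq. sc (a z) (ev z)) + sc b einf" by (auto simp: Vind_def)
  show "y \<in> V.span (insert einf (ev ` Fq))"
    unfolding y by (intro V.span_add V.span_sum V.span_scale V.span_base) auto
qed

lemma rho_Vind:
  assumes "g \<in> GL2" "\<And>z. z \<in> Fq \<Longrightarrow> \<rho> g (ev z) \<in> Vind" "\<rho> g einf \<in> Vind" "y \<in> Vind"
  shows "\<rho> g y \<in> Vind"
proof -
  obtain a b where "y = (\<Sum>z\<in>Fq. sc (a z) (ev z)) + sc b einf" using assms(4) by (auto simp: Vind_def)
  then have "\<rho> g y = (\<Sum>z\<in>Fq. sc (a z) (\<rho> g (ev z))) + sc b (\<rho> g einf)"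
    using assms(1) by (simp add: rho_add rho_sum rho_scale)
  also have "\<dots> \<in> Vind"
    using assms(2,3)
    by (intro V.subspace_add[OF Vind_subspace] V.subspace_sum[OF Vind_subspace] V.subspace_scale[OF Vind_subspace]) auto
  finally show ?thesis .
qed

lemma Vind_stable: "stable (KK val) Vind"
proof (rule stable_KK_if_Iwahori_smat)
  show "stable (Iwahori val) Vind"
    unfolding stable_def
  proof (intro ballI)
    fix g y assume g: "g \<in> Iwahori val" and y: "y \<in> Vind"
    obtain a b c d where ge: "g = mat2 a b c d" using mat2_eta by blast
    note e = Iwahori_mat2_entries[OF g[unfolded ge]]
    show "\<rho> g y \<in> Vind"
    proof (rule rho_Vind[OF Iwahori_GL2[OF g] _ _ y])
      show "\<rho> g (ev z) \<in> Vind" if "z \<in> Fq" for z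
      proof -
        have "(red a * z + red b) / red d \<in> Fq"
          using e that by (intro Fq.divide_mem Fq.add_mem Fq.mult_mem red_in_Fq)
        then have "ev ((red a * z + red b) / red d) \<in> Vind" using ev_Vaff Vaff_subset_Vind by blast
        then show ?thesis
          using rho_Iwahori_ev(1)[OF g[unfolded ge] that] ge V.subspace_scale[OF Vind_subspace] by simp
      qed
      show "\<rho> g einf \<in> Vind"
        using rho_Iwahori_einf(1)[OF g[unfolded ge]] ge V.subspace_scale[OF Vind_subspace] einf_Vind
        by simp
    qed
  qed
  show "\<rho> smat y \<in> Vind" if "y \<in> Vind" for y
  proof (rule rho_Vind[OF smat_GL2 _ _ that])
    show "\<rho> smat einf \<in> Vind" using rho_smat_einf ev_Vaff[OF Fq.zero_mem] Vaff_subset_Vind by auto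
    show "\<rho> smat (ev z) \<in> Vind" if "z \<in> Fq" for z
      using that rho_smat_ev_zero einf_Vind rho_smat_ev(1)[of z] Fq.divide_mem[OF Fq.one_mem that]
        ev_Vaff Vaff_subset_Vind V.subspace_scale[OF Vind_subspace]
      by (cases "z = 0") auto
  qed
qed

lemma stable_subspace_w_middle:
  assumes U: "stable (KK val) U" "V.subspace U" and y: "(\<Sum>i<q. sc (c i) (w i)) \<in> U"
    and k: "1 \<le> k" "k \<le> q - 2" "c k \<noteq> 0"
  shows "w k \<in> U"
proof -
  have "torus_proj k (\<Sum>i<q. sc (c i) (w i)) = (\<Sum>i<q. sc (c i) (if i = k then - w i else 0))"
    using dmat_GL2 torus_proj_w_middle[OF k(1,2)] by (simp add: alg_act_sum alg_act_scale)
  also have "\<dots> = sc (- c k) (w k)"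
  proof -
    have "k < q" using k(2) Fq.card_ge_2 by arith
    then show ?thesis by (simp add: if_distrib sum.delta' cong: if_cong)
  qed
  finally have "sc (- c k) (w k) \<in> U" using stable_torus_proj[OF U y, of k] by simp
  moreover have "- c k \<noteq> 0" using k by simp
  ultimately show ?thesis using V.subspace_scale_iff[OF U(2)] by blast
qed

lemma stable_subspace_w_ends:
  assumes U: "stable (KK val) U" "V.subspace U" and y: "sc c0 (w 0) + sc c (w (q - 1)) \<in> U"
    and "c \<noteq> 0"
  shows "w 0 \<in> U"
proof -
  have "avg 0 (w 0) = 0" using avg_w[of 0 0] Fq.sum_powers[of 0] by simp
  moreover have "avg 0 (w (q - 1)) = sc (- ((- 1) ^ (q - 1))) (w 0)"
    using avg_w_lower[of 0 "q - 1"] Fq.card_ge_2 by simp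
  ultimately have "avg 0 (sc c0 (w 0) + sc c (w (q - 1))) = sc (- (c * (- 1) ^ (q - 1))) (w 0)"
    using umat_lift_GL2 by (simp add: alg_act_add alg_act_scale)
  then have "sc (- (c * (- 1) ^ (q - 1))) (w 0) \<in> U"
    using stable_avg[OF U y, of 0] by simp
  then show ?thesis
    using V.subspace_scale_iff[OF U(2), of "- (c * (- 1) ^ (q - 1))"] \<open>c \<noteq> 0\<close> by simp
qed

text \<open>A \<open>K\<close>-stable subspace meeting \<open>Vaff\<close> contains one of the \<open>w k\<close>: the torus projectors
  isolate the components with \<open>1 \<le> k \<le> q - 2\<close>, and \<open>avg 0\<close> maps \<open>w (q - 1)\<close> to a
  non-zero multiple of \<open>w 0\<close> and kills \<open>w 0\<close>.\<close>

lemma stable_subspace_has_w: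
  assumes U: "stable (KK val) U" "V.subspace U" and y: "y \<in> U" "y \<in> Vaff" "y \<noteq> 0"
  shows "\<exists>i<q. w i \<in> U \<and> w i \<noteq> 0"
proof -
  obtain c where yc: "y = (\<Sum>k<q. sc (c k) (w k))" using Vaff_w_expansion[OF y(2)] by blast
  show ?thesis
  proof (cases "\<exists>k. 1 \<le> k \<and> k \<le> q - 2 \<and> sc (c k) (w k) \<noteq> 0")
    case True
    then obtain k where k: "1 \<le> k" "k \<le> q - 2" "c k \<noteq> 0" "w k \<noteq> 0" by auto
    moreover have "k < q" using k(2) Fq.card_ge_2 by simp
    ultimately show ?thesis
      using stable_subspace_w_middle[OF U y(1)[unfolded yc] k(1-3)] by blast
  next
    case False
    have "sc (c k) (w k) = 0" if "k \<in> {..<q} - {0, q - 1}" for k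
    proof -
      have "1 \<le> k" "k \<le> q - 2" using that by auto
      then show ?thesis using False by blast
    qed
    then have "y = (\<Sum>k\<in>{0, q - 1}. sc (c k) (w k))"
      unfolding yc using Fq.card_ge_2 by (intro sum.mono_neutral_right) auto
    then have y2: "y = sc (c 0) (w 0) + sc (c (q - 1)) (w (q - 1))"
      using Fq.card_ge_2 by simp
    consider "c (q - 1) = 0" | "w 0 = 0" | "c (q - 1) \<noteq> 0" "w 0 \<noteq> 0" by blast
    then show ?thesis
    proof cases
      case 1
      then show ?thesis using y y2 V.subspace_scale_iff[OF U(2)] Fq.card_ge_2
        by (intro exI[of _ 0]) auto
    next
      case 2
      then show ?thesis using y y2 V.subspace_scale_iff[OF U(2)] Fq.card_ge_2
        by (intro exI[of _ "q - 1"]) auto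
    next
      case 3
      then show ?thesis
        using stable_subspace_w_ends[OF U y(1)[unfolded y2]] Fq.card_ge_2 by (intro exI[of _ 0]) auto
    qed
  qed
qed

text \<open>If \<open>w j\<close> is the first \<open>w\<close> in a stable subspace, every lower term of the binomial
  expansion of \<open>translate \<xi> (w j)\<close> vanishes, since \<open>avg\<close> would extract it.\<close>

lemma translate_w_least:
  assumes U: "stable (KK val) U" "V.subspace U" and j: "j < q" "w j \<in> U"
    and least: "\<And>k. k < j \<Longrightarrow> w k \<in> U \<Longrightarrow> w k = 0" and \<xi>: "\<xi> \<in> Fq"
  shows "translate \<xi> (w j) = w j"
proof -
  have "sc (of_nat (j choose k) * (- \<xi>) ^ (j - k)) (w k) = 0" if k: "k < j" for k
  proof (cases "(of_nat (j choose k) :: 'k) = 0")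
    case False
    have "avg (q - 1 + k - j) (w j) = sc (- (of_nat (j choose k) * (- 1) ^ (j - k))) (w k)"
      by (rule avg_w_lower) (use k j in auto)
    then have "sc (- (of_nat (j choose k) * (- 1) ^ (j - k))) (w k) \<in> U"
      using stable_avg[OF U j(2), of "q - 1 + k - j"] by simp
    moreover have "- (of_nat (j choose k) * (- 1) ^ (j - k)) \<noteq> (0 :: 'k)" using False by simp
    ultimately have "w k \<in> U" using V.subspace_scale_iff[OF U(2)] by blast
    then show ?thesis using least k by simp
  qed simp
  then have "translate \<xi> (w j) = (\<Sum>k\<in>{j}. sc (of_nat (j choose k) * (- \<xi>) ^ (j - k)) (w k))"
    unfolding translate_w[OF \<xi>] by (intro sum.mono_neutral_right) auto
  then show ?thesis by simp
qed


section \<open>Characters factoring through the determinant\<close>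

definition chr_diag1 :: "'f \<Rightarrow> 'k" where "chr_diag1 a = chr (mat2 a 0 0 1)"
definition chr_diag2 :: "'f \<Rightarrow> 'k" where "chr_diag2 a = chr (mat2 1 0 0 a)"

definition eps :: 'k where "eps = chr_diag1 (- 1)"

definition chr_factors_det :: bool where
  "chr_factors_det \<longleftrightarrow> (\<forall>m\<in>Fq - {0}. chr_diag1 (lift m) = chr_diag2 (lift m))"

lemma diag_Iwahori: "a \<in> \<oo> \<Longrightarrow> a \<notin> \<pp> \<Longrightarrow> d \<in> \<oo> \<Longrightarrow> d \<notin> \<pp> \<Longrightarrow> mat2 a 0 0 d \<in> Iwahori val"
  by (rule Iwahori_mat2I) auto

lemma chr_diag1_mult: "a \<in> \<oo> \<Longrightarrow> a \<notin> \<pp> \<Longrightarrow> b \<in> \<oo> \<Longrightarrow> b \<notin> \<pp> \<Longrightarrow> chr_diag1 (a * b) = chr_diag1 a * chr_diag1 b"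
  unfolding chr_diag1_def using chr_mult[OF diag_Iwahori[of a 1] diag_Iwahori[of b 1]] by (simp add: mat2_mult)

lemma chr_diag2_mult: "a \<in> \<oo> \<Longrightarrow> a \<notin> \<pp> \<Longrightarrow> b \<in> \<oo> \<Longrightarrow> b \<notin> \<pp> \<Longrightarrow> chr_diag2 (a * b) = chr_diag2 a * chr_diag2 b"
  unfolding chr_diag2_def using chr_mult[OF diag_Iwahori[of 1 a] diag_Iwahori[of 1 b]] by (simp add: mat2_mult)

lemma chr_diag_one_plus_maxideal: "r - 1 \<in> \<pp> \<Longrightarrow> chr_diag1 r = 1 \<and> chr_diag2 r = 1"
  unfolding chr_diag1_def chr_diag2_def by (auto intro!: chr_Iwahori1 Iwahori1_mat2I)

lemma eps_square: "eps * eps = 1"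
  using chr_diag1_mult[of "- 1" "- 1"] chr_diag_one_plus_maxideal[of 1] minus_one_unit
  by (simp add: eps_def)

lemma chr_Iwahori_mat2:
  assumes h: "mat2 a b c d \<in> Iwahori val"
  shows "chr (mat2 a b c d) = chr_diag1 a * chr_diag2 ((a * d - b * c) / a)"
proof -
  note e = Iwahori_mat2_entries[OF h]
  have a0: "a \<noteq> 0" using unit_nonzero e by blast
  have ia: "inverse a \<in> \<oo>" "inverse a \<notin> \<pp>" using unit_inverse e by auto
  have D: "(a * d - b * c) / a \<in> \<oo>" "(a * d - b * c) / a \<notin> \<pp>"
    using unit_mult[OF _ e(7) ia] e maxideal_intring by (auto simp: divide_inverse intro: intring_diff intring_mult)
  have l: "mat2 1 0 (c / a) 1 \<in> Iwahori1 val"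
    using maxideal_mult_right[OF e(4) ia(1)] by (intro Iwahori1_mat2I) (auto simp: divide_inverse)
  have u: "umat (b / a) \<in> Iwahori1 val" using umat_Iwahori1 divide_unit_intring e by blast
  have "chr (mat2 a b c d)
      = chr (mat2 1 0 (c / a) 1) * chr (mat2 a 0 0 1) * chr (mat2 1 0 0 ((a * d - b * c) / a)) * chr (umat (b / a))"
    using mat2_lower_diag_upper[OF a0, of b c d] Iwahori1_Iwahori[OF l] Iwahori1_Iwahori[OF u]
      diag_Iwahori[OF e(1,2)] diag_Iwahori[OF _ _ D]
    by (simp add: chr_mult Iwahori_mult)
  then show ?thesis using chr_Iwahori1[OF l] chr_Iwahori1[OF u] by (simp add: chr_diag1_def chr_diag2_def)
qed

lemma chr_diag_red:
  assumes a: "a \<in> \<oo>" "a \<notin> \<pp>"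
  shows "chr_diag1 a = chr_diag1 (lift (red a))" "chr_diag2 a = chr_diag2 (lift (red a))"
proof -
  have ia: "red a \<in> Fq" "red a \<noteq> 0" using red_in_Fq red_eq_0_iff a by auto
  define a0 where "a0 = lift (red a)"
  have a0: "a0 \<in> \<oo>" "a0 \<notin> \<pp>" "red a0 = red a" using lift_intring lift_unit ia by (auto simp: a0_def)
  define r where "r = a / a0"
  have r: "r \<in> \<oo>" "r - 1 \<in> \<pp>"
    using divide_unit_intring[OF a(1) a0(1,2)] red_eq_iff[of r 1] red_divide[OF a(1) a0(1,2)] ia a0
    by (simp_all add: r_def)
  have ru: "r \<in> \<oo>" "r \<notin> \<pp>" using one_plus_maxideal_unit[OF r(2)] by auto
  have "a = a0 * r" using unit_nonzero[OF a0(1,2)] by (simp add: r_def)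
  then show "chr_diag1 a = chr_diag1 (lift (red a))" "chr_diag2 a = chr_diag2 (lift (red a))"
    using chr_diag1_mult[OF a0(1,2) ru] chr_diag2_mult[OF a0(1,2) ru] chr_diag_one_plus_maxideal[OF r(2)]
    by (simp_all add: a0_def)
qed

lemma chr_eq_chr_diag1_det:
  assumes "chr_factors_det" and h: "h \<in> Iwahori val"
  shows "chr h = chr_diag1 (det h)"
proof -
  obtain a b c d where he: "h = mat2 a b c d" using mat2_eta by blast
  note e = Iwahori_mat2_entries[OF h[unfolded he]]
  have ia: "inverse a \<in> \<oo>" "inverse a \<notin> \<pp>" using unit_inverse e by auto
  have D: "(a * d - b * c) / a \<in> \<oo>" "(a * d - b * c) / a \<notin> \<pp>"
    using unit_mult[OF _ e(7) ia] e maxideal_intring by (auto simp: divide_inverse intro: intring_diff intring_mult)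
  have "chr_diag2 ((a * d - b * c) / a) = chr_diag1 ((a * d - b * c) / a)"
    using assms(1) chr_diag_red[OF D] red_in_Fq[OF D(1)] red_eq_0_iff[OF D(1)] D(2)
    by (simp add: chr_factors_det_def)
  then have "chr h = chr_diag1 (a * ((a * d - b * c) / a))"
    using chr_Iwahori_mat2[OF h[unfolded he]] chr_diag1_mult[OF e(1,2) D] he by simp
  also have "a * ((a * d - b * c) / a) = det h" using unit_nonzero[OF e(1,2)] he by (simp add: det_mat2)
  finally show ?thesis .
qed

definition smat_coeff :: "('k \<Rightarrow> 'k) \<Rightarrow> 'k \<Rightarrow> 'k \<Rightarrow> 'k" where
  "smat_coeff a b z = (if z = 0 then b else eps * a (1 / z))"

lemma rho_smat_sum_ev:
  "\<rho> smat (\<Sum>z\<in>Fq. sc (a z) (ev z))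
    = sc (a 0) einf + (\<Sum>z\<in>Fq - {0}. sc (a z * chr (mat2 (- 1 / lift z) 0 unif (lift z))) (ev (1 / z)))"
proof -
  have "(\<Sum>z\<in>Fq - {0}. sc (a z) (\<rho> smat (ev z)))
      = (\<Sum>z\<in>Fq - {0}. sc (a z * chr (mat2 (- 1 / lift z) 0 unif (lift z))) (ev (1 / z)))"
    by (rule sum.cong) (auto simp: rho_smat_ev(1))
  then show ?thesis
    using Fq.sum_split_zero[of "\<lambda>z. sc (a z) (\<rho> smat (ev z))"]
    by (simp add: rho_sum rho_scale smat_GL2 rho_smat_ev_zero)
qed

lemma rho_smat_combination:
  assumes "chr_factors_det"
  shows "\<rho> smat ((\<Sum>z\<in>Fq. sc (a z) (ev z)) + sc b einf) = (\<Sum>z\<in>Fq. sc (smat_coeff a b z) (ev z)) + sc (a 0) einf"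
proof -
  have c: "chr (mat2 (- 1 / lift z) 0 unif (lift z)) = eps" if "z \<in> Fq - {0}" for z
    using rho_smat_ev(2,3)[of z] chr_eq_chr_diag1_det[OF assms] that by (simp add: eps_def)
  have "(\<Sum>z\<in>Fq - {0}. sc (a z * eps) (ev (1 / z))) = (\<Sum>z\<in>Fq - {0}. sc (eps * a (1 / z)) (ev z))"
    using Fq.sum_inverse_nonzero[of "\<lambda>z. sc (a z * eps) (ev (1 / z))"] by (simp add: mult.commute)
  also have "\<dots> = (\<Sum>z\<in>Fq - {0}. sc (smat_coeff a b z) (ev z))"
    by (rule sum.cong) (auto simp: smat_coeff_def)
  finally have inv: "(\<Sum>z\<in>Fq - {0}. sc (a z * eps) (ev (1 / z))) = (\<Sum>z\<in>Fq - {0}. sc (smat_coeff a b z) (ev z))" .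
  have "(\<Sum>z\<in>Fq - {0}. sc (a z * chr (mat2 (- 1 / lift z) 0 unif (lift z))) (ev (1 / z)))
      = (\<Sum>z\<in>Fq - {0}. sc (a z * eps) (ev (1 / z)))"
    by (rule sum.cong) (simp_all only: c)
  moreover have "smat_coeff a b 0 = b" by (simp add: smat_coeff_def)
  ultimately show ?thesis
    using rho_smat_sum_ev[of a] inv Fq.sum_split_zero[of "\<lambda>z. sc (smat_coeff a b z) (ev z)"]
    by (simp add: rho_add rho_scale smat_GL2 rho_smat_einf algebra_simps)
qed

lemma sum_smat_coeff: "(\<Sum>z\<in>Fq. smat_coeff a b z) = b + eps * ((\<Sum>z\<in>Fq. a z) - a 0)"
proof -
  have "(\<Sum>z\<in>Fq - {0}. smat_coeff a b z) = (\<Sum>z\<in>Fq - {0}. eps * a (1 / z))"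
    by (rule sum.cong) (auto simp: smat_coeff_def)
  then show ?thesis
    using Fq.sum_split_zero[of "smat_coeff a b"] Fq.sum_split_zero[of a] Fq.sum_inverse_nonzero[of a]
    by (simp add: smat_coeff_def sum_distrib_left)
qed

text \<open>If \<open>chr\<close> factors through the determinant, \<open>\<Sum>a\<^sub>z ev z + b einf \<mapsto> eps \<Sum>a\<^sub>z + b\<close> is a
  \<open>K\<close>-equivariant functional to the character \<open>chr_diag1 \<circ> det\<close> on \<open>Vind\<close> (provided it is
  well defined); \<open>H\<close> is its kernel.\<close>

definition H :: "'v set" where
  "H = {y. \<exists>a b. y = (\<Sum>z\<in>Fq. sc (a z) (ev z)) + sc b einf \<and> eps * (\<Sum>z\<in>Fq. a z) + b = 0}"

lemma H_I: "y = (\<Sum>z\<in>Fq. sc (a z) (ev z)) + sc b einf \<Longrightarrow> eps * (\<Sum>z\<in>Fq. a z) + b = 0 \<Longrightarrow> y \<in> H"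
  unfolding H_def by blast

lemma H_subspace: "V.subspace H"
  unfolding V.subspace_def
proof (intro conjI ballI allI)
  show "0 \<in> H" unfolding H_def by (intro CollectI exI[of _ "\<lambda>_. 0"] exI[of _ 0]) simp
next
  fix x y assume "x \<in> H" "y \<in> H"
  then obtain a1 a2 b1 b2
    where x: "x = (\<Sum>z\<in>Fq. sc (a1 z) (ev z)) + sc b1 einf" "eps * (\<Sum>z\<in>Fq. a1 z) + b1 = 0"
      and y: "y = (\<Sum>z\<in>Fq. sc (a2 z) (ev z)) + sc b2 einf" "eps * (\<Sum>z\<in>Fq. a2 z) + b2 = 0"
    by (auto simp: H_def)
  have "x + y = (\<Sum>z\<in>Fq. sc (a1 z + a2 z) (ev z)) + sc (b1 + b2) einf"
    using x y by (simp add: sum.distrib V.scale_left_distrib)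
  moreover have "eps * (\<Sum>z\<in>Fq. a1 z + a2 z) + (b1 + b2)
      = (eps * (\<Sum>z\<in>Fq. a1 z) + b1) + (eps * (\<Sum>z\<in>Fq. a2 z) + b2)"
    by (simp add: sum.distrib algebra_simps)
  ultimately show "x + y \<in> H" using x y unfolding H_def by auto
next
  fix c x assume "x \<in> H"
  then obtain a b where x: "x = (\<Sum>z\<in>Fq. sc (a z) (ev z)) + sc b einf" "eps * (\<Sum>z\<in>Fq. a z) + b = 0"
    by (auto simp: H_def)
  have "sc c x = (\<Sum>z\<in>Fq. sc (c * a z) (ev z)) + sc (c * b) einf"
    using x by (simp add: V.scale_sum_right V.scale_right_distrib)
  moreover have "eps * (\<Sum>z\<in>Fq. c * a z) + c * b = c * (eps * (\<Sum>z\<in>Fq. a z) + b)"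
    by (simp add: sum_distrib_left[symmetric] algebra_simps)
  ultimately show "sc c x \<in> H" using x unfolding H_def by auto
qed

lemma w0_H: "w 0 \<in> H"
proof -
  have "w 0 = (\<Sum>z\<in>Fq. sc 1 (ev z)) + sc 0 einf" by (simp add: w_def)
  moreover have "eps * (\<Sum>z\<in>Fq. 1) + 0 = 0" using Fq.of_nat_card_eq_0 card_Fq by simp
  ultimately show ?thesis by (rule H_I)
qed

lemma H_smat:
  assumes "chr_factors_det" and "y \<in> H"
  shows "\<rho> smat y \<in> H"
proof -
  obtain a b where y: "y = (\<Sum>z\<in>Fq. sc (a z) (ev z)) + sc b einf" "eps * (\<Sum>z\<in>Fq. a z) + b = 0"
    using \<open>y \<in> H\<close> by (auto simp: H_def)
  have "eps * (\<Sum>z\<in>Fq. smat_coeff a b z) + a 0 = eps * (eps * (\<Sum>z\<in>Fq. a z) + b)"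
    unfolding sum_smat_coeff using eps_square by (simp add: algebra_simps)
  then show ?thesis
    using rho_smat_combination[OF assms(1), of a b] y by (intro H_I) simp_all
qed

lemma H_Iwahori:
  assumes "chr_factors_det" and g: "g \<in> Iwahori val" and "y \<in> H"
  shows "\<rho> g y \<in> H"
proof -
  obtain a0 b0 where y: "y = (\<Sum>z\<in>Fq. sc (a0 z) (ev z)) + sc b0 einf" "eps * (\<Sum>z\<in>Fq. a0 z) + b0 = 0"
    using \<open>y \<in> H\<close> by (auto simp: H_def)
  obtain a b c d where ge: "g = mat2 a b c d" using mat2_eta by blast
  note e = Iwahori_mat2_entries[OF g[unfolded ge]]
  define \<alpha> where "\<alpha> = red a / red d"
  define \<beta> where "\<beta> = red b / red d"
  define \<kappa> where "\<kappa> = chr_diag1 (a * d - b * c)"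
  have ab: "\<alpha> \<in> Fq" "\<alpha> \<noteq> 0" "\<beta> \<in> Fq"
    using e red_eq_0_iff by (auto simp: \<alpha>_def \<beta>_def intro!: Fq.divide_mem red_in_Fq)
  have "\<rho> g (ev z) = sc \<kappa> (ev (\<alpha> * z + \<beta>))" if "z \<in> Fq" for z
    using rho_Iwahori_ev(1,2,4)[OF g[unfolded ge] that] chr_eq_chr_diag1_det[OF assms(1)] ge
    by (simp add: \<kappa>_def \<alpha>_def \<beta>_def add_divide_distrib)
  moreover have "\<rho> g einf = sc \<kappa> einf"
    using rho_Iwahori_einf(1,2,4)[OF g[unfolded ge]] chr_eq_chr_diag1_det[OF assms(1)] ge
    by (simp add: \<kappa>_def)
  ultimately have "\<rho> g y = (\<Sum>z\<in>Fq. sc (\<kappa> * a0 z) (ev (\<alpha> * z + \<beta>))) + sc (\<kappa> * b0) einf"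
    using Iwahori_GL2[OF g] by (simp add: y rho_add rho_sum rho_scale mult.commute cong: sum.cong)
  also have "(\<Sum>z\<in>Fq. sc (\<kappa> * a0 z) (ev (\<alpha> * z + \<beta>))) = (\<Sum>z\<in>Fq. sc (\<kappa> * a0 ((z - \<beta>) / \<alpha>)) (ev z))"
    using Fq.sum_affine[OF ab, of "\<lambda>z. sc (\<kappa> * a0 ((z - \<beta>) / \<alpha>)) (ev z)"] ab by simp
  finally have "\<rho> g y = (\<Sum>z\<in>Fq. sc (\<kappa> * a0 ((z - \<beta>) / \<alpha>)) (ev z)) + sc (\<kappa> * b0) einf" .
  moreover have "(\<Sum>z\<in>Fq. a0 ((z - \<beta>) / \<alpha>)) = (\<Sum>z\<in>Fq. a0 z)"
    using Fq.sum_affine[OF ab, of "\<lambda>z. a0 ((z - \<beta>) / \<alpha>)"] ab by simp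
  then have "eps * (\<Sum>z\<in>Fq. \<kappa> * a0 ((z - \<beta>) / \<alpha>)) + \<kappa> * b0 = \<kappa> * (eps * (\<Sum>z\<in>Fq. a0 z) + b0)"
    by (simp add: sum_distrib_left[symmetric] algebra_simps)
  ultimately show "\<rho> g y \<in> H" using y(2) by (intro H_I) simp_all
qed

lemma H_stable: "chr_factors_det \<Longrightarrow> stable (KK val) H"
  using H_smat H_Iwahori by (intro stable_KK_if_Iwahori_smat) (auto simp: stable_def)

lemma avg_top_ev: "z \<in> Fq \<Longrightarrow> avg (q - 1) (ev z) = w 0 - ev z"
  using Fq.sum_translate[of z "\<lambda>\<zeta>. sc ((\<zeta> - z) ^ (q - 1)) (ev \<zeta>)"] sum_ev_indicator[of z]
  by (simp add: alg_act_def translate_ev add.commute)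

lemma avg_top_einf: "avg (q - 1) einf = - einf"
  using Fq.sum_powers[of "q - 1"] Fq.card_ge_2
  by (simp add: alg_act_def translate_einf V.scale_sum_left[symmetric])

text \<open>Linear relations among the \<open>ev z\<close> and \<open>einf\<close> are annihilated by the functional
  defining \<open>H\<close>, so that \<open>H\<close> is a proper subspace.\<close>

lemma relation_sum_coeffs:
  assumes "w 0 \<noteq> 0" and r: "(\<Sum>z\<in>Fq. sc (a z) (ev z)) + sc b einf = 0"
  shows "(\<Sum>z\<in>Fq. a z) = 0"
proof -
  have "0 = avg (q - 1) ((\<Sum>z\<in>Fq. sc (a z) (ev z)) + sc b einf)"
    using r umat_lift_GL2 by (simp add: alg_act_zero)
  also have "\<dots> = (\<Sum>z\<in>Fq. sc (a z) (avg (q - 1) (ev z))) + sc b (avg (q - 1) einf)"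
    using umat_lift_GL2 by (simp add: alg_act_add alg_act_sum alg_act_scale)
  also have "(\<Sum>z\<in>Fq. sc (a z) (avg (q - 1) (ev z))) = (\<Sum>z\<in>Fq. sc (a z) (w 0 - ev z))"
    by (rule sum.cong) (simp_all only: avg_top_ev)
  also have "sc b (avg (q - 1) einf) = - sc b einf"
    by (simp only: avg_top_einf V.scale_minus_right)
  also have "(\<Sum>z\<in>Fq. sc (a z) (w 0 - ev z)) + - sc b einf
      = sc (\<Sum>z\<in>Fq. a z) (w 0) - ((\<Sum>z\<in>Fq. sc (a z) (ev z)) + sc b einf)"
    by (simp add: V.scale_right_diff_distrib sum_subtractf V.scale_sum_left)
  finally show ?thesis using r assms(1) by simp
qed

context
  assumes det: "chr_factors_det" and w0: "w 0 \<noteq> 0"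
begin

lemma relation_einf_coeff:
  assumes r: "(\<Sum>z\<in>Fq. sc (a z) (ev z)) + sc b einf = 0"
  shows "b = eps * a 0"
proof -
  have "(\<Sum>z\<in>Fq. sc (smat_coeff a b z) (ev z)) + sc (a 0) einf = 0"
    using rho_smat_combination[OF det, of a b] r rho_zero[OF smat_GL2] by simp
  then have "b + eps * ((\<Sum>z\<in>Fq. a z) - a 0) = 0"
    using relation_sum_coeffs[OF w0] sum_smat_coeff by metis
  then show ?thesis using relation_sum_coeffs[OF w0 r] by (simp add: algebra_simps)
qed

lemma relation_functional:
  assumes u: "sc eps (w 0) + einf \<noteq> 0" and r: "(\<Sum>z\<in>Fq. sc (a z) (ev z)) + sc b einf = 0"
  shows "eps * (\<Sum>z\<in>Fq. a z) + b = 0"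
proof -
  have az: "a z = eps * b" if z: "z \<in> Fq" for z
  proof -
    have "translate (- z) ((\<Sum>z\<in>Fq. sc (a z) (ev z)) + sc b einf) = 0"
      using r by (simp add: rho_zero umat_GL2)
    then have "(\<Sum>u\<in>Fq. sc (a (u + z)) (ev u)) + sc b einf = 0"
      using Fq.minus_mem[OF z]
      by (simp add: rho_add rho_scale umat_GL2 translate_sum_ev translate_einf)
    then have "b = eps * a z" using relation_einf_coeff[of "\<lambda>u. a (u + z)"] by simp
    then show ?thesis using eps_square by (simp add: mult.assoc[symmetric])
  qed
  then have "(\<Sum>z\<in>Fq. sc (a z) (ev z)) = sc b (sc eps (w 0))"
    by (simp add: w_def V.scale_sum_right mult.commute cong: sum.cong)
  then have "sc b (sc eps (w 0) + einf) = 0" using r by (simp add: V.scale_right_distrib)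
  then have "b = 0" using u by simp
  then show ?thesis using az by simp
qed

lemma not_in_H: "sc eps (w 0) + einf \<noteq> 0 \<Longrightarrow> sc eps (w 0) + einf \<notin> H"
proof
  assume u: "sc eps (w 0) + einf \<noteq> 0" and "sc eps (w 0) + einf \<in> H"
  then obtain a b where ab: "sc eps (w 0) + einf = (\<Sum>z\<in>Fq. sc (a z) (ev z)) + sc b einf"
    "eps * (\<Sum>z\<in>Fq. a z) + b = 0"
    by (auto simp: H_def)
  have "(\<Sum>z\<in>Fq. sc (a z - eps) (ev z)) + sc (b - 1) einf
      = ((\<Sum>z\<in>Fq. sc (a z) (ev z)) + sc b einf) - (sc eps (w 0) + einf)"
    by (simp add: w_def V.scale_left_diff_distrib sum_subtractf V.scale_sum_right algebra_simps)
  then have "eps * (\<Sum>z\<in>Fq. a z - eps) + (b - 1) = 0"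
    using ab(1) by (intro relation_functional[OF u]) simp
  then show False
    using ab(2) Fq.of_nat_card_eq_0 card_Fq by (simp add: sum_subtractf algebra_simps)
qed

end

abbreviation gen :: "'v \<Rightarrow> 'v set" where "gen \<equiv> gen_subrep sc \<rho> (KK val)"

lemma gen_subspace: "V.subspace (gen x)"
  by (simp add: gen_subrep_def)

lemma gen_self: "x \<in> gen x"
  using V.span_base[of x "{\<rho> g x | g. g \<in> KK val}"] rho_one[of x] KK_mat2_iff[of 1 0 0 1]
  by (force simp: gen_subrep_def mat_1_eq_mat2)

lemma gen_minimal: "stable (KK val) U \<Longrightarrow> V.subspace U \<Longrightarrow> x \<in> U \<Longrightarrow> gen x \<subseteq> U"
  unfolding gen_subrep_def stable_def by (rule V.span_minimal) auto

lemma gen_stable: "stable (KK val) (gen x)"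
  unfolding stable_def
proof (intro ballI)
  fix g y assume g: "g \<in> KK val" and y: "y \<in> gen x"
  from y[unfolded gen_subrep_def] show "\<rho> g y \<in> gen x"
    unfolding gen_subrep_def
  proof (induction rule: V.span_induct_alt)
    case base
    then show ?case using KK_GL2[OF g] by (simp add: rho_zero V.span_zero)
  next
    case (step c z y)
    then obtain h where h: "h \<in> KK val" "z = \<rho> h x" by blast
    then have "\<rho> g z \<in> V.span {\<rho> g x | g. g \<in> KK val}"
      using g KK_GL2 KK_mult[OF g h(1)] by (auto simp: rho_mult[symmetric] intro: V.span_base)
    then show ?case
      using step KK_GL2[OF g] by (simp add: rho_add rho_scale V.span_add V.span_scale)
  qed
qed


section \<open>Stable lines\<close>

text \<open>A \<open>K\<close>-stable subspace \<open>U \<subseteq> Vind\<close> with \<open>U \<inter> Vaff = 0\<close> is a line, spanned by a vector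
  \<open>y + einf\<close> with \<open>y \<in> Vaff\<close>.\<close>

context
  fixes U y
  assumes U: "stable (KK val) U" "V.subspace U" and U_Vaff: "\<And>x. x \<in> U \<Longrightarrow> x \<in> Vaff \<Longrightarrow> x = 0"
    and y: "y \<in> Vaff" "y + einf \<in> U" "y + einf \<noteq> 0"
begin

lemma line_eq: "X \<in> U \<Longrightarrow> Y \<in> Vaff \<Longrightarrow> X = Y + sc \<beta> einf \<Longrightarrow> X = sc \<beta> (y + einf)"
proof -
  assume X: "X \<in> U" "Y \<in> Vaff" "X = Y + sc \<beta> einf"
  have "X - sc \<beta> (y + einf) = Y - sc \<beta> y" using X(3) by (simp add: V.scale_right_distrib)
  moreover have "X - sc \<beta> (y + einf) \<in> U" using V.subspace_diff[OF U(2) X(1) V.subspace_scale[OF U(2) y(2)]] .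
  moreover have "Y - sc \<beta> y \<in> Vaff" using V.subspace_diff[OF Vaff_subspace X(2) V.subspace_scale[OF Vaff_subspace y(1)]] .
  ultimately show ?thesis using U_Vaff by fastforce
qed

lemma line_einf_notin_Vaff: "einf \<notin> Vaff"
  using U_Vaff[OF y(2)] V.subspace_add[OF Vaff_subspace y(1)] y(3) by blast

lemma line_smat: "y = (\<Sum>z\<in>Fq. sc (a z) (ev z)) \<Longrightarrow> \<rho> smat (y + einf) = sc (a 0) (y + einf)"
proof (rule line_eq)
  assume ya: "y = (\<Sum>z\<in>Fq. sc (a z) (ev z))"
  let ?Y = "(\<Sum>z\<in>Fq - {0}. sc (a z * chr (mat2 (- 1 / lift z) 0 unif (lift z))) (ev (1 / z))) + ev 0"
  show "\<rho> smat (y + einf) \<in> U" using U(1) y(2) smat_KK by (auto simp: stable_def)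
  show "?Y \<in> Vaff"
    by (intro V.subspace_add[OF Vaff_subspace] Vaff_sum ev_Vaff) (auto intro: Fq.divide_mem Fq.one_mem Fq.zero_mem)
  show "\<rho> smat (y + einf) = ?Y + sc (a 0) einf"
    using ya rho_smat_sum_ev[of a] by (simp add: rho_add smat_GL2 rho_smat_einf algebra_simps)
qed

lemma line_translate: "\<xi> \<in> Fq \<Longrightarrow> translate \<xi> y = y"
proof -
  assume \<xi>: "\<xi> \<in> Fq"
  obtain a where ya: "y = (\<Sum>z\<in>Fq. sc (a z) (ev z))" using y(1) by (auto simp: Vaff_def)
  have "translate \<xi> (y + einf) = translate \<xi> y + sc 1 einf"
    using translate_einf[OF \<xi>] by (simp add: rho_add umat_GL2)
  moreover have "translate \<xi> y \<in> Vaff"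
    unfolding ya translate_sum_ev[OF \<xi>] Vaff_def by (intro CollectI exI[of _ "\<lambda>z. a (z - \<xi>)"] refl)
  ultimately have "translate \<xi> (y + einf) = sc 1 (y + einf)"
    using line_eq stable_translate[OF U(1) \<xi> y(2)] by blast
  then show ?thesis using translate_einf[OF \<xi>] by (simp add: rho_add umat_GL2)
qed

lemma line_multiple_w0: "\<exists>c. y = sc c (w 0) \<and> \<rho> smat (y + einf) = sc c (y + einf)"
proof -
  obtain a where ya: "y = (\<Sum>z\<in>Fq. sc (a z) (ev z))" using y(1) by (auto simp: Vaff_def)
  have "a z = a 0" if z: "z \<in> Fq" for z
  proof -
    have "y = (\<Sum>u\<in>Fq. sc (a (u + z)) (ev u))"
      using line_translate[OF Fq.minus_mem[OF z]] translate_sum_ev[OF Fq.minus_mem[OF z], of a] ya by simp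
    then have "sc (a z) (y + einf) = sc (a 0) (y + einf)"
      using line_smat[of "\<lambda>u. a (u + z)"] line_smat[OF ya] by simp
    then show ?thesis using y(3) by simp
  qed
  then have "y = sc (a 0) (w 0)"
    unfolding ya w_def V.scale_sum_right by (intro sum.cong) simp_all
  then show ?thesis using line_smat[OF ya] by blast
qed

lemma line_w0_nonzero:
  assumes c: "y = sc c (w 0)" "\<rho> smat (y + einf) = sc c (y + einf)"
  shows "c \<noteq> 0" and "w 0 \<noteq> 0"
proof -
  have smat: "\<rho> smat (y + einf) = sc c (\<rho> smat (w 0)) + tv"
    using c(1) by (simp add: rho_add rho_scale smat_GL2 rho_smat_einf ev_zero)
  show "c \<noteq> 0"
  proof
    assume "c = 0"
    then show False using smat c(2) tv_nonzero by simp
  qed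
  show "w 0 \<noteq> 0"
  proof
    assume "w 0 = 0"
    then have "tv = sc c einf" using smat c by (simp add: rho_zero smat_GL2)
    then have "einf = sc (1 / c) tv" using \<open>c \<noteq> 0\<close> by simp
    then show False using line_einf_notin_Vaff V.subspace_scale[OF Vaff_subspace tv_Vaff] by simp
  qed
qed

lemma line_chr_factors_det:
  assumes c: "y = sc c (w 0)" "\<rho> smat (y + einf) = sc c (y + einf)"
  shows "chr_factors_det"
  unfolding chr_factors_det_def
proof
  fix m assume m: "m \<in> Fq - {0}"
  have "\<rho> (dmat m) einf = sc (chr_diag2 (lift m)) einf"
    using rho_Iwahori_einf(1)[OF dmat_Iwahori[OF m, unfolded dmat_def]] by (simp add: dmat_def chr_diag2_def)
  moreover have "\<rho> (dmat m) (w 0) = sc (chr_diag1 (lift m)) (w 0)"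
    using rho_dmat_w[OF m, of 0] by (simp add: chr_diag1_def dmat_def)
  ultimately have d: "\<rho> (dmat m) (y + einf) = sc (c * chr_diag1 (lift m)) (w 0) + sc (chr_diag2 (lift m)) einf"
    using c(1) Iwahori_GL2[OF dmat_Iwahori[OF m]] by (simp add: rho_add rho_scale)
  moreover have "\<rho> (dmat m) (y + einf) \<in> U"
    using U(1) y(2) Iwahori_KK[OF dmat_Iwahori[OF m]] by (auto simp: stable_def)
  ultimately have "\<rho> (dmat m) (y + einf) = sc (chr_diag2 (lift m)) (y + einf)"
    using line_eq V.subspace_scale[OF Vaff_subspace w_Vaff] by blast
  then have "sc (c * chr_diag1 (lift m)) (w 0) + sc (chr_diag2 (lift m)) einf
      = sc (chr_diag2 (lift m) * c) (w 0) + sc (chr_diag2 (lift m)) einf"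
    using d c(1) by (simp only: V.scale_right_distrib V.scale_scale)
  then have "sc (c * chr_diag1 (lift m)) (w 0) = sc (chr_diag2 (lift m) * c) (w 0)"
    by (rule add_right_imp_eq)
  then have "c * chr_diag1 (lift m) = chr_diag2 (lift m) * c"
    using line_w0_nonzero(2)[OF c] V.scale_cancel_right by blast
  then show "chr_diag1 (lift m) = chr_diag2 (lift m)"
    using line_w0_nonzero(1)[OF c] by (simp add: mult.commute)
qed

text \<open>Computing \<open>\<rho> smat (y + einf)\<close> in two ways pins down \<open>c\<close>: otherwise all \<open>ev \<xi>\<close>
  coincide, and \<open>w 0 = q * ev 0 = 0\<close>.\<close>

lemma line_eq_eps_w0: "y = sc eps (w 0)"
proof -
  obtain c where c: "y = sc c (w 0)" "\<rho> smat (y + einf) = sc c (y + einf)"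
    using line_multiple_w0 by blast
  note det = line_chr_factors_det[OF c] and nz = line_w0_nonzero[OF c]
  have "\<rho> smat (w 0) = (\<Sum>z\<in>Fq. sc (smat_coeff (\<lambda>_. 1) 0 z) (ev z)) + sc 1 einf"
    using rho_smat_combination[OF det, of "\<lambda>_. 1" 0] by (simp add: w_def)
  also have "(\<Sum>z\<in>Fq. sc (smat_coeff (\<lambda>_. 1) 0 z) (ev z)) = sc eps (w 0 - ev 0)"
    using Fq.sum_split_zero[of "\<lambda>z. sc (smat_coeff (\<lambda>_. 1) 0 z) (ev z)"] Fq.sum_split_zero[of ev]
    by (simp add: smat_coeff_def w_def V.scale_sum_right)
  finally have E0: "sc (c * eps) (w 0 - ev 0) + ev 0 = sc (c * c) (w 0)"
    using c ev_zero by (simp add: rho_add rho_scale smat_GL2 rho_smat_einf V.scale_right_distrib)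
  have E: "sc (c * eps) (w 0 - ev \<xi>) + ev \<xi> = sc (c * c) (w 0)" if "\<xi> \<in> Fq" for \<xi>
  proof -
    have "translate \<xi> (sc (c * eps) (w 0 - ev 0) + ev 0) = translate \<xi> (sc (c * c) (w 0))"
      using E0 by simp
    then show ?thesis using that translate_w[OF that, of 0] translate_ev[OF that Fq.zero_mem]
      by (simp add: rho_add rho_scale rho_diff umat_GL2)
  qed
  have "c * eps = 1"
  proof (rule ccontr)
    assume ne: "c * eps \<noteq> 1"
    have "sc (c * eps - 1) (ev \<xi> - ev 0) = 0" if "\<xi> \<in> Fq" for \<xi>
    proof -
      have "sc (c * eps - 1) (ev \<xi> - ev 0)
          = (sc (c * eps) (w 0 - ev 0) + ev 0) - (sc (c * eps) (w 0 - ev \<xi>) + ev \<xi>)"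
        by (simp add: algebra_simps V.scale_left_diff_distrib V.scale_right_diff_distrib)
      then show ?thesis using E[OF that] E[OF Fq.zero_mem] by simp
    qed
    then have "ev \<xi> = ev 0" if "\<xi> \<in> Fq" for \<xi> using ne that by simp
    then have "w 0 = sc (of_nat q) (ev 0)" by (simp add: w_def V.sum_constant_scale card_Fq cong: sum.cong)
    then show False using nz(2) Fq.of_nat_card_eq_0 by simp
  qed
  then have "c = eps" using eps_square by (metis mult.assoc mult.commute mult_1)
  then show ?thesis using c(1) by simp
qed

end

lemma stable_subspace_meets_Vaff:
  assumes U: "stable (KK val) U" "V.subspace U" "U \<subseteq> Vind" "U \<noteq> {0}"
    and gen_w0: "w 0 \<noteq> 0 \<Longrightarrow> U \<subseteq> gen (w 0)"
  shows "\<exists>x\<in>U. x \<in> Vaff \<and> x \<noteq> 0"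
proof (rule ccontr)
  assume "\<not> ?thesis"
  then have U_Vaff: "\<And>x. x \<in> U \<Longrightarrow> x \<in> Vaff \<Longrightarrow> x = 0" by blast
  obtain u where u: "u \<in> U" "u \<noteq> 0" using U(2,4) V.subspace_0 by blast
  then obtain e b where e: "e \<in> Vaff" "u = e + sc b einf" using Vind_cases U(3) by blast
  then have "b \<noteq> 0" using U_Vaff u by auto
  define y where "y = sc (1 / b) e"
  have "y + einf = sc (1 / b) u" using \<open>b \<noteq> 0\<close> by (simp add: y_def e(2) V.scale_right_distrib)
  then have y: "y \<in> Vaff" "y + einf \<in> U" "y + einf \<noteq> 0"
    using V.subspace_scale[OF Vaff_subspace e(1)] V.subspace_scale[OF U(2) u(1)] u \<open>b \<noteq> 0\<close>
    by (simp_all add: y_def)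
  note line = line_eq_eps_w0[OF U(1,2) U_Vaff y]
  obtain c where c: "y = sc c (w 0)" "\<rho> smat (y + einf) = sc c (y + einf)"
    using line_multiple_w0[OF U(1,2) U_Vaff y] by blast
  note det = line_chr_factors_det[OF U(1,2) U_Vaff y c] and w0 = line_w0_nonzero(2)[OF U(1,2) U_Vaff y c]
  have "y + einf \<in> H"
    using gen_w0[OF w0] gen_minimal[OF H_stable[OF det] H_subspace w0_H] y(2) by blast
  then show False using not_in_H[OF det w0] y(3) line by simp
qed


section \<open>Minimal stable subspaces\<close>

definition candidate :: "'v set \<Rightarrow> bool" where
  "candidate U \<longleftrightarrow> V.subspace U \<and> stable (KK val) U \<and> U \<subseteq> Vind \<and> (\<exists>y\<in>U. y \<in> Vaff \<and> y \<noteq> 0)"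

lemma candidate_props: "candidate U \<Longrightarrow> V.subspace U" "candidate U \<Longrightarrow> stable (KK val) U"
  "candidate U \<Longrightarrow> U \<subseteq> Vind"
  by (auto simp: candidate_def)

lemma minimal_candidate_exists:
  obtains U0 where "candidate U0" "\<And>U. candidate U \<Longrightarrow> U \<subseteq> U0 \<Longrightarrow> U = U0"
proof -
  have "candidate Vind"
    unfolding candidate_def using Vind_subspace Vind_stable tv_Vaff tv_nonzero Vaff_subset_Vind by blast
  then obtain U0 where U0: "candidate U0" "\<And>U. candidate U \<Longrightarrow> V.dim U0 \<le> V.dim U"
    using ex_has_least_nat[of candidate Vind V.dim] by blast
  have "U = U0" if "candidate U" "U \<subseteq> U0" for U
    using V.subspace_eq_if_dim_le[of U U0 "insert einf (ev ` Fq)"] that U0 Vind_subset_span Fq.finite_S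
    by (auto simp: candidate_def)
  then show thesis using that U0(1) by blast
qed

context
  fixes U0
  assumes U0: "candidate U0" and U0_minimal: "\<And>U. candidate U \<Longrightarrow> U \<subseteq> U0 \<Longrightarrow> U = U0"
begin

lemmas U0_props = candidate_props[OF U0]

lemma gen_eq_minimal_candidate: "x \<in> U0 \<Longrightarrow> x \<in> Vaff \<Longrightarrow> x \<noteq> 0 \<Longrightarrow> gen x = U0"
  using U0_minimal[of "gen x"] gen_subspace gen_stable gen_self
    gen_minimal[OF U0_props(2,1)] U0_props(3) unfolding candidate_def by blast

lemma least_w_in_minimal_candidate:
  obtains j where "j < q" "w j \<in> U0" "w j \<noteq> 0" "\<And>k. k < j \<Longrightarrow> w k \<in> U0 \<Longrightarrow> w k = 0"
proof -
  obtain i where i: "i < q" "w i \<in> U0" "w i \<noteq> 0"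
    using stable_subspace_has_w[OF U0_props(2,1)] U0 by (auto simp: candidate_def)
  define j where "j = (LEAST i. i < q \<and> w i \<in> U0 \<and> w i \<noteq> 0)"
  show thesis
  proof (rule that)
    show "j < q" "w j \<in> U0" "w j \<noteq> 0"
      using LeastI[of "\<lambda>i. i < q \<and> w i \<in> U0 \<and> w i \<noteq> 0" i] i by (auto simp: j_def)
    show "w k = 0" if "k < j" "w k \<in> U0" for k
      using not_less_Least[of k "\<lambda>i. i < q \<and> w i \<in> U0 \<and> w i \<noteq> 0"] that \<open>j < q\<close>
      by (auto simp: j_def)
  qed
qed

lemma w0_in_minimal_candidate: "w 0 \<in> U0"
proof -
  obtain j where j: "j < q" "w j \<in> U0" using least_w_in_minimal_candidate by blast
  have "avg (q - 1 - j) (w j) = sc (- ((- 1) ^ j)) (w 0)"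
    using avg_w_lower[of 0 j] j(1) Fq.card_ge_2 by simp
  then have "sc (- ((- 1) ^ j)) (w 0) \<in> U0"
    using stable_avg[OF U0_props(2,1) j(2), of "q - 1 - j"] by simp
  moreover have "- ((- 1) ^ j) \<noteq> (0 :: 'k)" by simp
  ultimately show ?thesis using V.subspace_scale_iff[OF U0_props(1)] by blast
qed

lemma minimal_candidate_irreducible: "irreducible_subrep sc \<rho> (KK val) U0"
  unfolding irreducible_subrep_def
proof (intro conjI allI impI)
  show "U0 \<noteq> {0}" using U0 by (auto simp: candidate_def)
  fix U assume U: "V.subspace U \<and> U \<subseteq> U0 \<and> (\<forall>g\<in>KK val. \<forall>u\<in>U. \<rho> g u \<in> U)"
  then have "stable (KK val) U" by (simp add: stable_def)
  show "U = {0} \<or> U = U0"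
  proof (cases "\<exists>y\<in>U. y \<in> Vaff \<and> y \<noteq> 0")
    case True
    then have "candidate U"
      using U U0_props(3) \<open>stable (KK val) U\<close> unfolding candidate_def by blast
    then show ?thesis using U U0_minimal by blast
  next
    case False
    have "w 0 \<noteq> 0 \<Longrightarrow> U \<subseteq> gen (w 0)"
      using gen_eq_minimal_candidate[OF w0_in_minimal_candidate w_Vaff] U by blast
    moreover have "V.subspace U" "U \<subseteq> Vind" using U U0_props(3) by auto
    ultimately show ?thesis
      using stable_subspace_meets_Vaff[OF \<open>stable (KK val) U\<close>] False by blast
  qed
qed

end

lemma exists_w_generating_irreducible:
  "\<exists>j \<le> q - 1. w j \<in> invariants \<rho> (Iwahori1 val) \<and> irreducible_subrep sc \<rho> (KK val) (gen (w j))"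
proof -
  obtain U0 where U0: "candidate U0" "\<And>U. candidate U \<Longrightarrow> U \<subseteq> U0 \<Longrightarrow> U = U0"
    using minimal_candidate_exists by blast
  obtain j where j: "j < q" "w j \<in> U0" "w j \<noteq> 0" "\<And>k. k < j \<Longrightarrow> w k \<in> U0 \<Longrightarrow> w k = 0"
    using least_w_in_minimal_candidate[OF U0] by blast
  have "w j \<in> invariants \<rho> (Iwahori1 val)"
    using translate_w_least[OF candidate_props(2,1)[OF U0(1)] j(1,2,4)] by (intro w_Iwahori1_invariant)
  moreover have "gen (w j) = U0" using gen_eq_minimal_candidate[OF U0 j(2) w_Vaff j(3)] .
  moreover have "j \<le> q - 1" using j(1) by simp
  ultimately show ?thesis using minimal_candidate_irreducible[OF U0] by auto
qed

end

theorem lemma4p1: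
  fixes val :: "'f::field \<Rightarrow> int"
    and unif_elt :: 'f
    and \<iota> :: "'f set \<Rightarrow> 'k::field"
    and sc :: "'k \<Rightarrow> 'v::ab_group_add \<Rightarrow> 'v"
    and \<rho> :: "'f^2^2 \<Rightarrow> 'v \<Rightarrow> 'v"
    and v :: 'v
    and chr :: "'f^2^2 \<Rightarrow> 'k"
  assumes F: "nonarch_local_field val"
    and unif: "unif_elt \<noteq> 0" "val unif_elt = 1"
    and kclosed: "alg_closed TYPE('k)"
    and kalg: "algebraic_over_prime_field TYPE('k)"
    and emb: "residue_embedding val \<iota>"
    and rep: "smooth_rep val sc \<rho>"
    and v_inv: "v \<in> invariants \<rho> (Iwahori1 val)"
    and v_nz: "v \<noteq> 0"
    and chi_char: "\<forall>g\<in>Iwahori val. \<forall>h\<in>Iwahori val. chr (g ** h) = chr g * chr h"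
    and chi_nz: "\<forall>g\<in>Iwahori val. chr g \<noteq> 0"
    and v_chi: "\<forall>g\<in>Iwahori val. \<rho> g v = sc (chr g) v"
  shows "\<exists>j::nat. j \<le> qq val - 1 \<and>
    (let w = (\<Sum>l\<in>residue_field val.
                sc (\<iota> l ^ j) (\<rho> (mat2 1 (teich val l) 0 1 ** mat2 unif_elt 0 0 1) v))
     in w \<in> invariants \<rho> (Iwahori1 val) \<and>
        irreducible_subrep sc \<rho> (KK val) (gen_subrep sc \<rho> (KK val) w))"
proof -
  interpret Iwahori_eigen_rep val unif_elt \<iota> sc \<rho> v chr
    by unfold_locales (use assms in auto)
  have "(\<Sum>l\<in>residue_field val. sc (\<iota> l ^ j) (\<rho> (mat2 1 (teich val l) 0 1 ** mat2 unif_elt 0 0 1) v))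
      = w j" for j
  proof -
    have "\<rho> (mat2 1 (teich val l) 0 1 ** mat2 unif_elt 0 0 1) v = ev (\<iota> l)" if "l \<in> residue_field val" for l
      using rho_umat_tv[OF teich(1)[OF that]] teich(2)[OF that]
      by (simp add: umat_def[symmetric] tmat_def[symmetric] rho_mult umat_GL2 tmat_unif_GL2 tv_def)
    then show ?thesis
      using sum.reindex[of \<iota> "residue_field val" "\<lambda>z. sc (z ^ j) (ev z)"] embedding
      by (simp add: w_def Fq_def residue_embedding_def cong: sum.cong)
  qed
  then show ?thesis using exists_w_generating_irreducible by (simp add: Let_def)
qed

end
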